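(* Let $\mathcal A$ be a perfect algebra over a field $k$ and $S$ a commutative, associative, unital $k$-algebra, and assume the map $\psi:C(\mathcal A)\otimes S\to C(\mathcal A\otimes S)$, $\gamma\otimes s\mapsto \gamma\otimes L_s$, is an isomorphism. Then, as vector spaces, $$\mathcal D_{\mathcal A\otimes 1}(\mathcal A\otimes S)\cong \mathcal D\big(\mathbf 1\otimes S,\,C(\mathcal A)\otimes S\big).$$
   Context: An algebra over $k$ is a $k$-vector space with a bilinear product (not necessarily associative); $\mathcal A$ is perfect if $\mathcal A\mathcal A=\mathcal A$. The centroid $C(\mathcal A)=\{\gamma\in\operatorname{End}_k(\mathcal A)\mid \gamma(xy)=\gamma(x)y=x\gamma(y)\ \forall x,y\}$; for perfect $\mathcal A$ it is commutative, so $C(\mathcal A)\otimes S$ is a commutative associative unital algebra, containing $\mathbf 1\otimes S$ as a subalgebra ($\mathbf 1$ the identity of $\mathcal A$). $L_s$ is left multiplication by $s$ on $S$. For a subalgebra $\mathcal B$ of an algebra $\mathcal C$, $\mathcal D(\mathcal B,\mathcal C)$ is the space of $k$-linear maps $\delta:\mathcal B\to\mathcal C$ with $\delta(bb')=\delta(b)b'+b\delta(b')$. $\mathcal D_{\mathcal A\otimes 1}(\mathcal A\otimes S)$ is the set of derivations $\delta$ of $\mathcal A\otimes S$ with $\delta(\mathcal A\otimes 1)=0$. *)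

theory Defs
  imports Complex_Main "HOL-Library.FuncSet"
begin

text \<open>The tensor product of k-subspaces U and V (with given addition and scalar
multiplication) is the free k-vector space on U x V (finitely supported functions
U x V to k) modulo the subspace generated by the bilinearity relations.
Its elements are the cosets (sets of free vectors).\<close>

definition ind :: "'p \<Rightarrow> 'p \<Rightarrow> 'k::zero_neq_one" where
  "ind q p = (if p = q then 1 else 0)"

definition lincombs :: "('p \<Rightarrow> 'k::comm_ring_1) set \<Rightarrow> ('p \<Rightarrow> 'k) set" where
  "lincombs G = {(\<lambda>p. \<Sum>g\<in>t. r g * g p) | t r. finite t \<and> t \<subseteq> G}"

definition free_on :: "'u set \<Rightarrow> 'v set \<Rightarrow> ('u \<times> 'v \<Rightarrow> 'k::zero) set" where
  "free_on U V = {f. finite {p. f p \<noteq> 0} \<and> {p. f p \<noteq> 0} \<subseteq> U \<times> V}"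

definition tensor_rels ::
  "('u \<Rightarrow> 'u \<Rightarrow> 'u) \<Rightarrow> ('k::field \<Rightarrow> 'u \<Rightarrow> 'u) \<Rightarrow> 'u set \<Rightarrow>
   ('v \<Rightarrow> 'v \<Rightarrow> 'v) \<Rightarrow> ('k \<Rightarrow> 'v \<Rightarrow> 'v) \<Rightarrow> 'v set \<Rightarrow> ('u \<times> 'v \<Rightarrow> 'k) set" where
  "tensor_rels addU scU U addV scV V = lincombs (
     {(\<lambda>p. ind (addU u u', v) p - ind (u, v) p - ind (u', v) p) | u u' v. u \<in> U \<and> u' \<in> U \<and> v \<in> V}
   \<union> {(\<lambda>p. ind (u, addV v v') p - ind (u, v) p - ind (u, v') p) | u v v'. u \<in> U \<and> v \<in> V \<and> v' \<in> V}
   \<union> {(\<lambda>p. ind (scU c u, v) p - c * ind (u, v) p) | c u v. u \<in> U \<and> v \<in> V}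
   \<union> {(\<lambda>p. ind (u, scV c v) p - c * ind (u, v) p) | c u v. u \<in> U \<and> v \<in> V})"

definition tcls :: "('p \<Rightarrow> 'k::ab_group_add) set \<Rightarrow> ('p \<Rightarrow> 'k) \<Rightarrow> ('p \<Rightarrow> 'k) set" where
  "tcls R f = {g. (\<lambda>p. g p - f p) \<in> R}"

definition tcarrier :: "('u \<times> 'v \<Rightarrow> 'k::ab_group_add) set \<Rightarrow> 'u set \<Rightarrow> 'v set \<Rightarrow> ('u \<times> 'v \<Rightarrow> 'k) set set" where
  "tcarrier R U V = tcls R ` free_on U V"

definition rep :: "'x set \<Rightarrow> 'x" where
  "rep X = (SOME f. f \<in> X)"

definition tadd :: "('p \<Rightarrow> 'k::ab_group_add) set \<Rightarrow> ('p \<Rightarrow> 'k) set \<Rightarrow> ('p \<Rightarrow> 'k) set \<Rightarrow> ('p \<Rightarrow> 'k) set" where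
  "tadd R X Y = tcls R (\<lambda>p. rep X p + rep Y p)"

definition tscale :: "('p \<Rightarrow> 'k::comm_ring) set \<Rightarrow> 'k \<Rightarrow> ('p \<Rightarrow> 'k) set \<Rightarrow> ('p \<Rightarrow> 'k) set" where
  "tscale R c X = tcls R (\<lambda>p. c * rep X p)"

definition tzero :: "('p \<Rightarrow> 'k::ab_group_add) set \<Rightarrow> ('p \<Rightarrow> 'k) set" where
  "tzero R = tcls R (\<lambda>_. 0)"

definition tmk :: "('u \<times> 'v \<Rightarrow> 'k::{ab_group_add,zero_neq_one}) set \<Rightarrow> 'u \<Rightarrow> 'v \<Rightarrow> ('u \<times> 'v \<Rightarrow> 'k) set" where
  "tmk R u v = tcls R (ind (u, v))"

definition fmul2 :: "('p \<Rightarrow> 'q \<Rightarrow> 'r) \<Rightarrow> ('p \<Rightarrow> 'k::comm_ring) \<Rightarrow> ('q \<Rightarrow> 'k) \<Rightarrow> ('r \<Rightarrow> 'k)" where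
  "fmul2 m f g = (\<lambda>r. \<Sum>p\<in>{p. f p \<noteq> 0}. \<Sum>q\<in>{q. g q \<noteq> 0}. if m p q = r then f p * g q else 0)"

definition lin_on :: "'v set \<Rightarrow> ('v \<Rightarrow> 'v \<Rightarrow> 'v) \<Rightarrow> ('k \<Rightarrow> 'v \<Rightarrow> 'v) \<Rightarrow>
    'w set \<Rightarrow> ('w \<Rightarrow> 'w \<Rightarrow> 'w) \<Rightarrow> ('k \<Rightarrow> 'w \<Rightarrow> 'w) \<Rightarrow> ('v \<Rightarrow> 'w) \<Rightarrow> bool" where
  "lin_on V addV scV W addW scW f \<longleftrightarrow>
     (\<forall>x\<in>V. f x \<in> W) \<and> (\<forall>x\<in>V. \<forall>y\<in>V. f (addV x y) = addW (f x) (f y)) \<and>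
     (\<forall>c. \<forall>x\<in>V. f (scV c x) = scW c (f x))"

text \<open>D(B, C): k-linear maps from the subalgebra B to the algebra C (both with C's operations)
  satisfying the Leibniz rule; maps are taken extensional (undefined outside B).\<close>
definition derivs :: "'c set \<Rightarrow> 'c set \<Rightarrow> ('c \<Rightarrow> 'c \<Rightarrow> 'c) \<Rightarrow> ('k \<Rightarrow> 'c \<Rightarrow> 'c) \<Rightarrow>
    ('c \<Rightarrow> 'c \<Rightarrow> 'c) \<Rightarrow> ('c \<Rightarrow> 'c) set" where
  "derivs B C add sc mul = {d \<in> extensional B. lin_on B add sc C add sc d \<and>
     (\<forall>b\<in>B. \<forall>b'\<in>B. d (mul b b') = add (mul (d b) b') (mul b (d b')))}"

definition centroid_on :: "'c set \<Rightarrow> ('c \<Rightarrow> 'c \<Rightarrow> 'c) \<Rightarrow> ('k \<Rightarrow> 'c \<Rightarrow> 'c) \<Rightarrow>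
    ('c \<Rightarrow> 'c \<Rightarrow> 'c) \<Rightarrow> ('c \<Rightarrow> 'c) set" where
  "centroid_on C add sc mul = {g \<in> extensional C. lin_on C add sc C add sc g \<and>
     (\<forall>x\<in>C. \<forall>y\<in>C. g (mul x y) = mul (g x) y \<and> g (mul x y) = mul x (g y))}"

definition fun_space_iso :: "(('b \<Rightarrow> 'c) \<Rightarrow> ('d \<Rightarrow> 'e)) \<Rightarrow> ('b \<Rightarrow> 'c) set \<Rightarrow> 'b set \<Rightarrow>
    ('c \<Rightarrow> 'c \<Rightarrow> 'c) \<Rightarrow> ('k \<Rightarrow> 'c \<Rightarrow> 'c) \<Rightarrow> ('d \<Rightarrow> 'e) set \<Rightarrow> 'd set \<Rightarrow>
    ('e \<Rightarrow> 'e \<Rightarrow> 'e) \<Rightarrow> ('k \<Rightarrow> 'e \<Rightarrow> 'e) \<Rightarrow> bool" where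
  "fun_space_iso F D1 B1 add1 sc1 D2 B2 add2 sc2 \<longleftrightarrow> bij_betw F D1 D2 \<and>
     (\<forall>d\<in>D1. \<forall>d'\<in>D1. F (restrict (\<lambda>x. add1 (d x) (d' x)) B1) = restrict (\<lambda>y. add2 (F d y) (F d' y)) B2) \<and>
     (\<forall>c. \<forall>d\<in>D1. F (restrict (\<lambda>x. sc1 c (d x)) B1) = restrict (\<lambda>y. sc2 c (F d y)) B2)"

definition CA :: "('k \<Rightarrow> 'a::ab_group_add \<Rightarrow> 'a) \<Rightarrow> ('a \<Rightarrow> 'a \<Rightarrow> 'a) \<Rightarrow> ('a \<Rightarrow> 'a) set" where
  "CA sA mA = centroid_on UNIV (+) sA mA"

definition rels_AS :: "('k::field \<Rightarrow> 'a::ab_group_add \<Rightarrow> 'a) \<Rightarrow> ('k \<Rightarrow> 's::comm_ring_1 \<Rightarrow> 's) \<Rightarrow> ('a \<times> 's \<Rightarrow> 'k) set" where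
  "rels_AS sA sS = tensor_rels (+) sA UNIV (+) sS UNIV"

definition TAS :: "('k::field \<Rightarrow> 'a::ab_group_add \<Rightarrow> 'a) \<Rightarrow> ('k \<Rightarrow> 's::comm_ring_1 \<Rightarrow> 's) \<Rightarrow> ('a \<times> 's \<Rightarrow> 'k) set set" where
  "TAS sA sS = tcarrier (rels_AS sA sS) UNIV UNIV"

definition mulAS :: "('k::field \<Rightarrow> 'a::ab_group_add \<Rightarrow> 'a) \<Rightarrow> ('k \<Rightarrow> 's::comm_ring_1 \<Rightarrow> 's) \<Rightarrow> ('a \<Rightarrow> 'a \<Rightarrow> 'a) \<Rightarrow>
    ('a \<times> 's \<Rightarrow> 'k) set \<Rightarrow> ('a \<times> 's \<Rightarrow> 'k) set \<Rightarrow> ('a \<times> 's \<Rightarrow> 'k) set" where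
  "mulAS sA sS mA X Y = tcls (rels_AS sA sS) (fmul2 (\<lambda>(a, s) (b, t). (mA a b, s * t)) (rep X) (rep Y))"

definition rels_CS :: "('k::field \<Rightarrow> 'a::ab_group_add \<Rightarrow> 'a) \<Rightarrow> ('a \<Rightarrow> 'a \<Rightarrow> 'a) \<Rightarrow> ('k \<Rightarrow> 's::comm_ring_1 \<Rightarrow> 's) \<Rightarrow>
    (('a \<Rightarrow> 'a) \<times> 's \<Rightarrow> 'k) set" where
  "rels_CS sA mA sS = tensor_rels (\<lambda>g g' x. g x + g' x) (\<lambda>c g x. sA c (g x)) (CA sA mA) (+) sS UNIV"

definition TCS :: "('k::field \<Rightarrow> 'a::ab_group_add \<Rightarrow> 'a) \<Rightarrow> ('a \<Rightarrow> 'a \<Rightarrow> 'a) \<Rightarrow> ('k \<Rightarrow> 's::comm_ring_1 \<Rightarrow> 's) \<Rightarrow>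
    (('a \<Rightarrow> 'a) \<times> 's \<Rightarrow> 'k) set set" where
  "TCS sA mA sS = tcarrier (rels_CS sA mA sS) (CA sA mA) UNIV"

definition mulCS :: "('k::field \<Rightarrow> 'a::ab_group_add \<Rightarrow> 'a) \<Rightarrow> ('a \<Rightarrow> 'a \<Rightarrow> 'a) \<Rightarrow> ('k \<Rightarrow> 's::comm_ring_1 \<Rightarrow> 's) \<Rightarrow>
    (('a \<Rightarrow> 'a) \<times> 's \<Rightarrow> 'k) set \<Rightarrow> (('a \<Rightarrow> 'a) \<times> 's \<Rightarrow> 'k) set \<Rightarrow> (('a \<Rightarrow> 'a) \<times> 's \<Rightarrow> 'k) set" where
  "mulCS sA mA sS X Y = tcls (rels_CS sA mA sS) (fmul2 (\<lambda>(g, s) (g', t). (g \<circ> g', s * t)) (rep X) (rep Y))"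

definition OneS :: "('k::field \<Rightarrow> 'a::ab_group_add \<Rightarrow> 'a) \<Rightarrow> ('a \<Rightarrow> 'a \<Rightarrow> 'a) \<Rightarrow> ('k \<Rightarrow> 's::comm_ring_1 \<Rightarrow> 's) \<Rightarrow>
    (('a \<Rightarrow> 'a) \<times> 's \<Rightarrow> 'k) set set" where
  "OneS sA mA sS = {tmk (rels_CS sA mA sS) id s | s. True}"

text \<open>\<psi> : C(A) \<otimes> S \<rightarrow> End(A \<otimes> S), g \<otimes> s \<mapsto> g \<otimes> L_s, i.e. (a \<otimes> t) \<mapsto> g a \<otimes> s t.\<close>
definition psi :: "('k::field \<Rightarrow> 'a::ab_group_add \<Rightarrow> 'a) \<Rightarrow> ('a \<Rightarrow> 'a \<Rightarrow> 'a) \<Rightarrow> ('k \<Rightarrow> 's::comm_ring_1 \<Rightarrow> 's) \<Rightarrow>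
    (('a \<Rightarrow> 'a) \<times> 's \<Rightarrow> 'k) set \<Rightarrow> ('a \<times> 's \<Rightarrow> 'k) set \<Rightarrow> ('a \<times> 's \<Rightarrow> 'k) set" where
  "psi sA mA sS X = restrict (\<lambda>Y. tcls (rels_AS sA sS) (fmul2 (\<lambda>(g, s) (a, t). (g a, s * t)) (rep X) (rep Y))) (TAS sA sS)"

definition DerA1 :: "('k::field \<Rightarrow> 'a::ab_group_add \<Rightarrow> 'a) \<Rightarrow> ('a \<Rightarrow> 'a \<Rightarrow> 'a) \<Rightarrow> ('k \<Rightarrow> 's::comm_ring_1 \<Rightarrow> 's) \<Rightarrow>
    (('a \<times> 's \<Rightarrow> 'k) set \<Rightarrow> ('a \<times> 's \<Rightarrow> 'k) set) set" where
  "DerA1 sA mA sS = {d \<in> derivs (TAS sA sS) (TAS sA sS) (tadd (rels_AS sA sS)) (tscale (rels_AS sA sS)) (mulAS sA sS mA).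
      \<forall>a. d (tmk (rels_AS sA sS) a 1) = tzero (rels_AS sA sS)}"

definition Der1S :: "('k::field \<Rightarrow> 'a::ab_group_add \<Rightarrow> 'a) \<Rightarrow> ('a \<Rightarrow> 'a \<Rightarrow> 'a) \<Rightarrow> ('k \<Rightarrow> 's::comm_ring_1 \<Rightarrow> 's) \<Rightarrow>
    ((('a \<Rightarrow> 'a) \<times> 's \<Rightarrow> 'k) set \<Rightarrow> (('a \<Rightarrow> 'a) \<times> 's \<Rightarrow> 'k) set) set" where
  "Der1S sA mA sS = derivs (OneS sA mA sS) (TCS sA mA sS) (tadd (rels_CS sA mA sS)) (tscale (rels_CS sA mA sS)) (mulCS sA mA sS)"

end

theory Submission
  imports Defs
begin

text \<open>
  Let \<open>\<Gamma>\<close> be the centroid of \<open>A \<otimes> S\<close>. The commutator \<open>[d, \<gamma>]\<close> of a derivation \<open>d\<close>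
  with \<open>\<gamma> \<in> \<Gamma>\<close> lies again in \<open>\<Gamma>\<close>, so a derivation \<open>d\<close> of \<open>A \<otimes> S\<close> vanishing on
  \<open>A \<otimes> 1\<close> gives the map \<open>1 \<otimes> s \<mapsto> \<psi>\<^sup>-\<^sup>1[d, 1 \<otimes> L\<^sub>s]\<close>, which is a derivation of
  \<open>1 \<otimes> S\<close> into \<open>C(A) \<otimes> S\<close>. Since \<open>a \<otimes> s = (1 \<otimes> L\<^sub>s)(a \<otimes> 1)\<close> and \<open>d\<close> kills
  \<open>a \<otimes> 1\<close>, we have \<open>d(a \<otimes> s) = [d, 1 \<otimes> L\<^sub>s](a \<otimes> 1)\<close>, so \<open>d\<close> is determined by its
  image. Conversely, a derivation \<open>D\<close> of \<open>1 \<otimes> S\<close> induces the bilinear map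
  \<open>(a, s) \<mapsto> \<psi>(D(1 \<otimes> s))(a \<otimes> 1)\<close> and hence a linear map \<open>d\<close> on \<open>A \<otimes> S\<close>. It is a
  derivation because every \<open>\<psi>(D(1 \<otimes> s))\<close> lies in \<open>\<Gamma>\<close>, it vanishes on \<open>A \<otimes> 1\<close> by the
  Leibniz rule for \<open>D\<close> at \<open>1 = 1 \<cdot> 1\<close>, and it is sent back to \<open>D\<close>.
\<close>

section \<open>Finitely supported functions\<close>

definition supp :: "('p \<Rightarrow> 'k::zero) \<Rightarrow> 'p set" where
  "supp f = {p. f p \<noteq> 0}"

definition fin_supp :: "('p \<Rightarrow> 'k::zero) \<Rightarrow> bool" where
  "fin_supp f \<longleftrightarrow> finite (supp f)"

definition fun_subspace :: "('p \<Rightarrow> 'k::comm_ring_1) set \<Rightarrow> bool" where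
  "fun_subspace R \<longleftrightarrow> (\<lambda>_. 0) \<in> R \<and> (\<forall>f\<in>R. \<forall>g\<in>R. (\<lambda>p. f p + g p) \<in> R) \<and>
     (\<forall>c. \<forall>f\<in>R. (\<lambda>p. c * f p) \<in> R)"

lemma fun_subspace_zero: "fun_subspace R \<Longrightarrow> (\<lambda>_. 0) \<in> R"
  by (simp add: fun_subspace_def)

lemma fun_subspace_add: "fun_subspace R \<Longrightarrow> f \<in> R \<Longrightarrow> g \<in> R \<Longrightarrow> (\<lambda>p. f p + g p) \<in> R"
  by (simp add: fun_subspace_def)

lemma fun_subspace_scale: "fun_subspace R \<Longrightarrow> f \<in> R \<Longrightarrow> (\<lambda>p. c * f p) \<in> R"
  by (simp add: fun_subspace_def)

lemma fun_subspace_diff: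
  assumes "fun_subspace R" "f \<in> R" "g \<in> R"
  shows "(\<lambda>p. f p - g p) \<in> R"
proof -
  have "(\<lambda>p. f p + (-1) * g p) \<in> R"
    using assms by (intro fun_subspace_add fun_subspace_scale)
  then show ?thesis by simp
qed

lemma fun_subspace_sum:
  assumes "fun_subspace R" "finite F" "\<And>q. q \<in> F \<Longrightarrow> h q \<in> R"
  shows "(\<lambda>p. \<Sum>q\<in>F. h q p) \<in> R"
  using assms(2,3)
proof (induction F rule: finite_induct)
  case empty
  then show ?case using fun_subspace_zero[OF assms(1)] by simp
next
  case (insert x F)
  then have "(\<lambda>p. h x p + (\<Sum>q\<in>F. h q p)) \<in> R"
    using assms(1) by (intro fun_subspace_add) auto
  then show ?case using insert by simp
qed

lemma supp_ind [simp]: "supp (ind q :: _ \<Rightarrow> 'k::zero_neq_one) = {q}"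
  by (auto simp: supp_def ind_def)

lemma fin_supp_zero [simp]: "fin_supp (\<lambda>_. 0)"
  by (simp add: fin_supp_def supp_def)

lemma fin_supp_ind [simp]: "fin_supp (ind q :: _ \<Rightarrow> 'k::zero_neq_one)"
  by (simp add: fin_supp_def)

lemma fin_supp_add [simp]: "fin_supp f \<Longrightarrow> fin_supp g \<Longrightarrow> fin_supp (\<lambda>p. f p + g p :: 'k::comm_ring_1)"
  unfolding fin_supp_def supp_def by (rule finite_subset[of _ "{p. f p \<noteq> 0} \<union> {p. g p \<noteq> 0}"]) auto

lemma fin_supp_scale [simp]: "fin_supp f \<Longrightarrow> fin_supp (\<lambda>p. c * f p :: 'k::comm_ring_1)"
  unfolding fin_supp_def supp_def by (rule finite_subset[of _ "{p. f p \<noteq> 0}"]) auto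

lemma fin_supp_uminus [simp]: "fin_supp f \<Longrightarrow> fin_supp (\<lambda>p. - f p :: 'k::comm_ring_1)"
  using fin_supp_scale[of f "-1"] by simp

lemma fun_subspace_fin_supp: "fun_subspace {f :: 'p \<Rightarrow> 'k::comm_ring_1. fin_supp f}"
  by (simp add: fun_subspace_def)

lemma fin_supp_diff [simp]: "fin_supp f \<Longrightarrow> fin_supp g \<Longrightarrow> fin_supp (\<lambda>p. f p - g p :: 'k::comm_ring_1)"
  using fun_subspace_diff[OF fun_subspace_fin_supp] by blast

lemma fin_supp_sum:
  "finite F \<Longrightarrow> (\<And>q. q \<in> F \<Longrightarrow> fin_supp (h q :: _ \<Rightarrow> 'k::comm_ring_1)) \<Longrightarrow> fin_supp (\<lambda>p. \<Sum>q\<in>F. h q p)"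
  using fun_subspace_sum[OF fun_subspace_fin_supp] by blast

lemma fin_supp_expansion:
  assumes "fin_supp (f :: 'p \<Rightarrow> 'k::comm_ring_1)"
  shows "f = (\<lambda>p. \<Sum>q\<in>supp f. f q * ind q p)"
proof
  fix p
  have "(\<Sum>q\<in>supp f. f q * ind q p) = (\<Sum>q\<in>supp f. if q = p then f q else 0)"
    by (rule sum.cong) (auto simp: ind_def)
  also have "\<dots> = f p" using assms by (auto simp: fin_supp_def supp_def)
  finally show "f p = (\<Sum>q\<in>supp f. f q * ind q p)" by simp
qed

lemma free_on_iff: "f \<in> free_on U V \<longleftrightarrow> fin_supp f \<and> supp f \<subseteq> U \<times> V"
  by (simp add: free_on_def fin_supp_def supp_def)

lemma free_on_UNIV: "free_on UNIV UNIV = {f. fin_supp f}"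
  by (auto simp: free_on_iff)

lemma fun_subspace_free_on: "fun_subspace (free_on U V :: ('u \<times> 'v \<Rightarrow> 'k::comm_ring_1) set)"
  unfolding fun_subspace_def
  by (auto simp: free_on_iff supp_def subset_iff) (metis add.left_neutral mult_zero_right)+

lemma free_on_ind: "(u, v) \<in> U \<times> V \<Longrightarrow> (ind (u, v) :: _ \<Rightarrow> 'k::comm_ring_1) \<in> free_on U V"
  by (simp add: free_on_iff)

lemmas free_on_zero = fun_subspace_zero[OF fun_subspace_free_on]
lemmas free_on_add = fun_subspace_add[OF fun_subspace_free_on]
lemmas free_on_scale = fun_subspace_scale[OF fun_subspace_free_on]
lemmas free_on_diff = fun_subspace_diff[OF fun_subspace_free_on]

lemma lincombsI: "finite t \<Longrightarrow> t \<subseteq> G \<Longrightarrow> f = (\<lambda>p. \<Sum>g\<in>t. r g * g p) \<Longrightarrow> f \<in> lincombs G"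
  unfolding lincombs_def by blast

lemma lincombsE:
  assumes "f \<in> lincombs G"
  obtains t r where "finite t" "t \<subseteq> G" "f = (\<lambda>p. \<Sum>g\<in>t. r g * g p)"
  using assms unfolding lincombs_def by blast

lemma lincombs_generator: "g \<in> G \<Longrightarrow> g \<in> lincombs G"
  by (rule lincombsI[of "{g}" _ _ "\<lambda>_. 1"]) auto

lemma fun_subspace_lincombs: "fun_subspace (lincombs G)"
proof -
  have add: "(\<lambda>p. f p + g p) \<in> lincombs G" if F: "f \<in> lincombs G" and G: "g \<in> lincombs G" for f g
  proof -
    obtain t1 r1 where f: "finite t1" "t1 \<subseteq> G" "f = (\<lambda>p. \<Sum>g\<in>t1. r1 g * g p)"
      using F by (rule lincombsE)
    obtain t2 r2 where g: "finite t2" "t2 \<subseteq> G" "g = (\<lambda>p. \<Sum>g\<in>t2. r2 g * g p)"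
      using G by (rule lincombsE)
    define r1' where "r1' x = (if x \<in> t1 then r1 x else 0)" for x
    define r2' where "r2' x = (if x \<in> t2 then r2 x else 0)" for x
    have "(\<lambda>p. f p + g p) = (\<lambda>p. \<Sum>x\<in>t1 \<union> t2. (r1' x + r2' x) * x p)"
    proof
      fix p
      have "(\<Sum>x\<in>t1 \<union> t2. r1' x * x p) = (\<Sum>x\<in>t1. r1 x * x p)"
        by (rule sum.mono_neutral_cong_right) (use f g in \<open>auto simp: r1'_def\<close>)
      moreover have "(\<Sum>x\<in>t1 \<union> t2. r2' x * x p) = (\<Sum>x\<in>t2. r2 x * x p)"
        by (rule sum.mono_neutral_cong_right) (use f g in \<open>auto simp: r2'_def\<close>)
      ultimately show "f p + g p = (\<Sum>x\<in>t1 \<union> t2. (r1' x + r2' x) * x p)"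
        using f g by (simp add: distrib_right sum.distrib)
    qed
    then show ?thesis using f g by (intro lincombsI[of "t1 \<union> t2"]) auto
  qed
  have scale: "(\<lambda>p. c * f p) \<in> lincombs G" if F: "f \<in> lincombs G" for f c
  proof -
    obtain t r where f: "finite t" "t \<subseteq> G" "f = (\<lambda>p. \<Sum>g\<in>t. r g * g p)"
      using F by (rule lincombsE)
    then show ?thesis
      by (intro lincombsI[of t _ _ "\<lambda>g. c * r g"]) (auto simp: sum_distrib_left mult.assoc)
  qed
  have "(\<lambda>_. 0) \<in> lincombs G" by (rule lincombsI[of "{}"]) auto
  then show ?thesis unfolding fun_subspace_def using add scale by blast
qed

lemma lincombs_ind: "fin_supp (f :: 'p \<Rightarrow> 'k::comm_ring_1) \<Longrightarrow> f \<in> lincombs (ind ` supp f)"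
proof -
  assume fs: "fin_supp f"
  have inj: "inj (ind :: 'p \<Rightarrow> _ \<Rightarrow> 'k)"
    by (rule injI) (metis ind_def zero_neq_one)
  have "f = (\<lambda>p. \<Sum>q\<in>supp f. f q * ind q p)" by (rule fin_supp_expansion[OF fs])
  also have "\<dots> = (\<lambda>p. \<Sum>g\<in>ind ` supp f. f (inv ind g) * g p)"
    by (subst sum.reindex) (auto simp: inj_on_def inj[THEN injD] inv_f_f[OF inj])
  finally show ?thesis using fs by (intro lincombsI[of "ind ` supp f"]) (auto simp: fin_supp_def)
qed

definition fs_linear :: "(('p \<Rightarrow> 'k::comm_ring_1) \<Rightarrow> ('q \<Rightarrow> 'k)) \<Rightarrow> bool" where
  "fs_linear \<Phi> \<longleftrightarrow>
     (\<forall>f g. fin_supp f \<longrightarrow> fin_supp g \<longrightarrow> \<Phi> (\<lambda>p. f p + g p) = (\<lambda>x. \<Phi> f x + \<Phi> g x)) \<and>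
     (\<forall>f c. fin_supp f \<longrightarrow> \<Phi> (\<lambda>p. c * f p) = (\<lambda>x. c * \<Phi> f x))"

lemma fs_linear_add: "fs_linear \<Phi> \<Longrightarrow> fin_supp f \<Longrightarrow> fin_supp g \<Longrightarrow> \<Phi> (\<lambda>p. f p + g p) = (\<lambda>x. \<Phi> f x + \<Phi> g x)"
  unfolding fs_linear_def by blast

lemma fs_linear_scale: "fs_linear \<Phi> \<Longrightarrow> fin_supp f \<Longrightarrow> \<Phi> (\<lambda>p. c * f p) = (\<lambda>x. c * \<Phi> f x)"
  unfolding fs_linear_def by blast

lemma fs_linear_diff:
  assumes "fs_linear \<Phi>" "fin_supp f" "fin_supp g"
  shows "\<Phi> (\<lambda>p. f p - g p) = (\<lambda>x. \<Phi> f x - \<Phi> g x)"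
proof -
  have "\<Phi> (\<lambda>p. f p + (-1) * g p) = (\<lambda>x. \<Phi> f x + \<Phi> (\<lambda>p. (-1) * g p) x)"
    using assms by (intro fs_linear_add) auto
  then show ?thesis using fs_linear_scale[OF assms(1,3), of "-1"] by simp
qed

lemma fs_linear_sum:
  fixes \<Phi> :: "('p \<Rightarrow> 'k::comm_ring_1) \<Rightarrow> ('q \<Rightarrow> 'k)"
  assumes "fs_linear \<Phi>" "finite F" "\<And>q. q \<in> F \<Longrightarrow> fin_supp (h q)"
  shows "\<Phi> (\<lambda>p. \<Sum>q\<in>F. c q * h q p) = (\<lambda>x. \<Sum>q\<in>F. c q * \<Phi> (h q) x)"
  using assms(2,3)
proof (induction F rule: finite_induct)
  case empty
  show ?case using fs_linear_scale[OF assms(1) fin_supp_zero, of 0] by simp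
next
  case (insert x F)
  have "\<Phi> (\<lambda>p. \<Sum>q\<in>insert x F. c q * h q p) = \<Phi> (\<lambda>p. c x * h x p + (\<Sum>q\<in>F. c q * h q p))"
    using insert by simp
  also have "\<dots> = (\<lambda>y. \<Phi> (\<lambda>p. c x * h x p) y + \<Phi> (\<lambda>p. \<Sum>q\<in>F. c q * h q p) y)"
    using insert by (intro fs_linear_add[OF assms(1)] fin_supp_sum) auto
  finally show ?case using insert fs_linear_scale[OF assms(1)] by simp
qed

lemma fs_linear_lincombs_mem:
  assumes "fun_subspace R" "fs_linear \<Phi>" "\<And>g. g \<in> G \<Longrightarrow> fin_supp g \<and> \<Phi> g \<in> R" "f \<in> lincombs G"
  shows "\<Phi> f \<in> R"
proof -
  obtain t r where t: "finite t" "t \<subseteq> G" and f: "f = (\<lambda>p. \<Sum>g\<in>t. r g * g p)"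
    using assms(4) by (rule lincombsE)
  have "\<Phi> f = (\<lambda>x. \<Sum>g\<in>t. r g * \<Phi> g x)"
    unfolding f using fs_linear_sum[OF assms(2) t(1), of "\<lambda>g. g" r] assms(3) t(2) by auto
  also have "\<dots> \<in> R" using assms t by (intro fun_subspace_sum fun_subspace_scale) auto
  finally show ?thesis .
qed

lemma fs_linear_eqI:
  fixes \<Phi> :: "('p \<Rightarrow> 'k::comm_ring_1) \<Rightarrow> ('q \<Rightarrow> 'k)"
  assumes "fs_linear \<Phi>" "fs_linear \<Psi>" "\<And>p. \<Phi> (ind p) = \<Psi> (ind p)" "fin_supp f"
  shows "\<Phi> f = \<Psi> f"
proof -
  have fin: "finite (supp f)" using assms(4) by (simp add: fin_supp_def)
  have "\<Phi> f = \<Phi> (\<lambda>p. \<Sum>q\<in>supp f. f q * ind q p)" by (subst fin_supp_expansion[OF assms(4)]) (rule refl)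
  also have "\<dots> = (\<lambda>x. \<Sum>q\<in>supp f. f q * \<Psi> (ind q) x)"
    by (simp add: fs_linear_sum[OF assms(1) fin] assms(3))
  also have "\<dots> = \<Psi> (\<lambda>p. \<Sum>q\<in>supp f. f q * ind q p)" by (simp add: fs_linear_sum[OF assms(2) fin])
  also have "\<dots> = \<Psi> f" by (subst (2) fin_supp_expansion[OF assms(4)]) (rule refl)
  finally show ?thesis .
qed

lemma fs_linear_comp: "fs_linear \<Phi> \<Longrightarrow> fs_linear \<Psi> \<Longrightarrow> (\<And>f. fin_supp f \<Longrightarrow> fin_supp (\<Phi> f)) \<Longrightarrow> fs_linear (\<lambda>f. \<Psi> (\<Phi> f))"
  unfolding fs_linear_def by simp

section \<open>Tensor products as quotients of free vector spaces\<close>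

lemma self_in_tcls: "fun_subspace R \<Longrightarrow> f \<in> tcls R f"
  by (simp add: tcls_def fun_subspace_zero)

lemma tcls_eq_iff:
  assumes "fun_subspace R"
  shows "tcls R f = tcls R g \<longleftrightarrow> (\<lambda>p. f p - g p) \<in> R"
proof
  assume "tcls R f = tcls R g"
  then have "f \<in> tcls R g" using self_in_tcls[OF assms] by blast
  then show "(\<lambda>p. f p - g p) \<in> R" by (simp add: tcls_def)
next
  assume fg: "(\<lambda>p. f p - g p) \<in> R"
  show "tcls R f = tcls R g"
  proof (rule set_eqI)
    fix h
    have "(\<lambda>p. h p - g p) = (\<lambda>p. (h p - f p) + (f p - g p))"
      and "(\<lambda>p. h p - f p) = (\<lambda>p. (h p - g p) - (f p - g p))" by simp_all
    then show "h \<in> tcls R f \<longleftrightarrow> h \<in> tcls R g"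
      unfolding tcls_def mem_Collect_eq
      using fun_subspace_add[OF assms _ fg, of "\<lambda>p. h p - f p"]
        fun_subspace_diff[OF assms _ fg, of "\<lambda>p. h p - g p"] by argo
  qed
qed

lemma rep_tcls_diff: "fun_subspace R \<Longrightarrow> (\<lambda>p. rep (tcls R f) p - f p) \<in> R"
  unfolding rep_def using someI[of "\<lambda>g. g \<in> tcls R f", OF self_in_tcls] by (simp add: tcls_def)

lemma tcls_rep: "fun_subspace R \<Longrightarrow> tcls R (rep (tcls R f)) = tcls R f"
  by (simp add: tcls_eq_iff rep_tcls_diff)

lemma rep_tcls_mem:
  assumes "fun_subspace R" "fun_subspace S" "R \<subseteq> S" "f \<in> S"
  shows "rep (tcls R f) \<in> S"
proof -
  have "(\<lambda>p. f p + (rep (tcls R f) p - f p)) \<in> S"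
    using assms rep_tcls_diff[OF assms(1), of f] by (intro fun_subspace_add) auto
  then show ?thesis by simp
qed

lemma tadd_tcls:
  assumes "fun_subspace R"
  shows "tadd R (tcls R f) (tcls R g) = tcls R (\<lambda>p. f p + g p)"
proof -
  have "(\<lambda>p. (rep (tcls R f) p + rep (tcls R g) p) - (f p + g p)) =
        (\<lambda>p. (rep (tcls R f) p - f p) + (rep (tcls R g) p - g p))" by (simp add: algebra_simps)
  also have "\<dots> \<in> R" using assms by (intro fun_subspace_add rep_tcls_diff)
  finally show ?thesis unfolding tadd_def using assms by (simp add: tcls_eq_iff)
qed

lemma tscale_tcls:
  assumes "fun_subspace R"
  shows "tscale R c (tcls R f) = tcls R (\<lambda>p. c * f p)"
proof -
  have "(\<lambda>p. c * rep (tcls R f) p - c * f p) = (\<lambda>p. c * (rep (tcls R f) p - f p))"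
    by (simp add: algebra_simps)
  also have "\<dots> \<in> R" using assms by (intro fun_subspace_scale rep_tcls_diff)
  finally show ?thesis unfolding tscale_def using assms by (simp add: tcls_eq_iff)
qed

lemma fmul2_eq_sum:
  assumes "finite P" "supp f \<subseteq> P" "finite Q" "supp g \<subseteq> Q"
  shows "fmul2 m f g r = (\<Sum>p\<in>P. \<Sum>q\<in>Q. if m p q = r then f p * g q else 0)"
proof -
  have "fmul2 m f g r = (\<Sum>p\<in>supp f. \<Sum>q\<in>supp g. if m p q = r then f p * g q else 0)"
    by (simp add: fmul2_def supp_def)
  also have "\<dots> = (\<Sum>p\<in>supp f. \<Sum>q\<in>Q. if m p q = r then f p * g q else 0)"
    by (rule sum.cong[OF refl], rule sum.mono_neutral_left) (use assms in \<open>auto simp: supp_def\<close>)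
  also have "\<dots> = (\<Sum>p\<in>P. \<Sum>q\<in>Q. if m p q = r then f p * g q else 0)"
    by (rule sum.mono_neutral_left) (use assms in \<open>auto simp: supp_def cong: if_cong\<close>)
  finally show ?thesis .
qed

lemma fmul2_swap: "fmul2 m f g = fmul2 (\<lambda>q p. m p q) g (f :: _ \<Rightarrow> 'k::comm_ring)"
  unfolding fmul2_def by (rule ext, subst sum.swap, intro sum.cong refl) (simp add: mult.commute)

lemma fmul2_add_left:
  fixes f1 :: "'p \<Rightarrow> 'k::comm_ring"
  assumes "fin_supp f1" "fin_supp f2" "fin_supp g"
  shows "fmul2 m (\<lambda>p. f1 p + f2 p) g = (\<lambda>r. fmul2 m f1 g r + fmul2 m f2 g r)"
proof
  fix r
  let ?P = "supp f1 \<union> supp f2" and ?Q = "supp g"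
  have fin: "finite ?P" "finite ?Q" using assms by (auto simp: fin_supp_def)
  have "supp (\<lambda>p. f1 p + f2 p) \<subseteq> ?P" by (auto simp: supp_def)
  moreover have "(if m p q = r then (f1 p + f2 p) * g q else 0) =
      (if m p q = r then f1 p * g q else 0) + (if m p q = r then f2 p * g q else 0)" for p q
    by (simp add: distrib_right)
  ultimately show "fmul2 m (\<lambda>p. f1 p + f2 p) g r = fmul2 m f1 g r + fmul2 m f2 g r"
    using fin by (simp add: fmul2_eq_sum[of ?P _ ?Q] sum.distrib)
qed

lemma fmul2_scale_left:
  fixes f :: "'p \<Rightarrow> 'k::comm_ring"
  assumes "fin_supp f" "fin_supp g"
  shows "fmul2 m (\<lambda>p. c * f p) g = (\<lambda>r. c * fmul2 m f g r)"
proof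
  fix r
  have fin: "finite (supp f)" "finite (supp g)" using assms by (auto simp: fin_supp_def)
  have "supp (\<lambda>p. c * f p) \<subseteq> supp f" by (auto simp: supp_def)
  moreover have "(if m p q = r then c * f p * g q else 0) = c * (if m p q = r then f p * g q else 0)" for p q
    by (simp add: ac_simps)
  ultimately show "fmul2 m (\<lambda>p. c * f p) g r = c * fmul2 m f g r"
    using fin by (simp add: fmul2_eq_sum[of "supp f" _ "supp g"] sum_distrib_left)
qed

lemma fmul2_add_right:
  fixes f :: "'p \<Rightarrow> 'k::comm_ring"
  assumes "fin_supp f" "fin_supp g1" "fin_supp g2"
  shows "fmul2 m f (\<lambda>p. g1 p + g2 p) = (\<lambda>r. fmul2 m f g1 r + fmul2 m f g2 r)"
  using fmul2_add_left[OF assms(2,3,1), of "\<lambda>q p. m p q"] by (simp add: fmul2_swap[of m f])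

lemma fmul2_scale_right:
  fixes f :: "'p \<Rightarrow> 'k::comm_ring"
  assumes "fin_supp f" "fin_supp g"
  shows "fmul2 m f (\<lambda>p. c * g p) = (\<lambda>r. c * fmul2 m f g r)"
  using fmul2_scale_left[OF assms(2,1), of "\<lambda>q p. m p q"] by (simp add: fmul2_swap[of m f])

lemma fmul2_ind: "fmul2 m (ind p) (ind q) = (ind (m p q) :: _ \<Rightarrow> 'k::comm_ring_1)"
  by (rule ext) (simp add: fmul2_eq_sum[of "{p}" _ "{q}"] ind_def)

lemma supp_fmul2: "supp (fmul2 m f g) \<subseteq> (\<lambda>(p, q). m p q) ` (supp f \<times> supp g)"
proof
  fix r assume "r \<in> supp (fmul2 m f g)"
  then have "(\<Sum>p\<in>supp f. \<Sum>q\<in>supp g. if m p q = r then f p * g q else 0) \<noteq> 0"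
    by (simp add: supp_def fmul2_def)
  moreover have "(\<Sum>p\<in>supp f. \<Sum>q\<in>supp g. if m p q = r then f p * g q else 0) = 0"
    if "\<forall>p\<in>supp f. \<forall>q\<in>supp g. m p q \<noteq> r"
    using that by (intro sum.neutral ballI) auto
  ultimately obtain p q where "p \<in> supp f" "q \<in> supp g" "m p q = r" by blast
  then show "r \<in> (\<lambda>(p, q). m p q) ` (supp f \<times> supp g)" by force
qed

lemma fin_supp_fmul2 [simp]: "fin_supp f \<Longrightarrow> fin_supp g \<Longrightarrow> fin_supp (fmul2 m f g)"
  unfolding fin_supp_def by (rule finite_subset[OF supp_fmul2]) auto

lemma fmul2_diff_left:
  fixes f1 :: "'p \<Rightarrow> 'k::comm_ring_1"
  assumes "fin_supp f1" "fin_supp f2" "fin_supp g"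
  shows "fmul2 m (\<lambda>p. f1 p - f2 p) g = (\<lambda>r. fmul2 m f1 g r - fmul2 m f2 g r)"
  using fmul2_add_left[OF assms(1) fin_supp_scale[OF assms(2)] assms(3), of m "-1"]
    fmul2_scale_left[OF assms(2,3), of m "-1"] by simp

lemma fmul2_diff_right:
  fixes f :: "'p \<Rightarrow> 'k::comm_ring_1"
  assumes "fin_supp f" "fin_supp g1" "fin_supp g2"
  shows "fmul2 m f (\<lambda>p. g1 p - g2 p) = (\<lambda>r. fmul2 m f g1 r - fmul2 m f g2 r)"
  using fmul2_diff_left[OF assms(2,3,1), of "\<lambda>q p. m p q"] by (simp add: fmul2_swap[of m f])

lemma fs_linear_fmul2_left: "fin_supp (g :: _ \<Rightarrow> 'k::comm_ring_1) \<Longrightarrow> fs_linear (\<lambda>f. fmul2 m f g)"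
  by (simp add: fs_linear_def fmul2_add_left fmul2_scale_left)

lemma fs_linear_fmul2_right: "fin_supp (f :: _ \<Rightarrow> 'k::comm_ring_1) \<Longrightarrow> fs_linear (\<lambda>g. fmul2 m f g)"
  by (simp add: fs_linear_def fmul2_add_right fmul2_scale_right)

lemma fmul2_assoc:
  fixes f :: "'p \<Rightarrow> 'k::comm_ring_1" and g :: "'q \<Rightarrow> 'k" and h :: "'r \<Rightarrow> 'k"
  assumes assoc: "\<And>p q r. m (m' p q) r = n p (n' q r)"
    and "fin_supp f" "fin_supp g" "fin_supp h"
  shows "fmul2 m (fmul2 m' f g) h = fmul2 n f (fmul2 n' g h)"
proof -
  have ind3: "fmul2 m (fmul2 m' (ind p) (ind q)) h = fmul2 n (ind p) (fmul2 n' (ind q) h)" for p q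
    by (rule fs_linear_eqI[OF fs_linear_fmul2_right fs_linear_comp[OF fs_linear_fmul2_right fs_linear_fmul2_right]
          _ assms(4)])
       (simp_all add: fmul2_ind assoc)
  have ind1: "fmul2 m (fmul2 m' (ind p) g) h = fmul2 n (ind p) (fmul2 n' g h)" for p
    by (rule fs_linear_eqI[OF fs_linear_comp[OF fs_linear_fmul2_right fs_linear_fmul2_left]
          fs_linear_comp[OF fs_linear_fmul2_left fs_linear_fmul2_right] _ assms(3)])
       (simp_all add: ind3 assms)
  show ?thesis
    by (rule fs_linear_eqI[OF fs_linear_comp[OF fs_linear_fmul2_left fs_linear_fmul2_left]
          fs_linear_fmul2_left _ assms(2)])
       (simp_all add: ind1 assms)
qed

lemma fmul2_ind_left_neutral:
  assumes "\<And>q. m p q = q" "fin_supp (h :: 'q \<Rightarrow> 'k::comm_ring_1)"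
  shows "fmul2 m (ind p) h = h"
  by (rule fs_linear_eqI[OF fs_linear_fmul2_right _ _ assms(2), where \<Psi>="\<lambda>h. h"])
     (auto simp: fs_linear_def fmul2_ind assms(1))

definition lin_closed :: "('u \<Rightarrow> 'u \<Rightarrow> 'u) \<Rightarrow> ('k \<Rightarrow> 'u \<Rightarrow> 'u) \<Rightarrow> 'u set \<Rightarrow> bool" where
  "lin_closed add sc U \<longleftrightarrow> (\<forall>u\<in>U. \<forall>u'\<in>U. add u u' \<in> U) \<and> (\<forall>c. \<forall>u\<in>U. sc c u \<in> U)"

definition tensor_gens ::
  "('u \<Rightarrow> 'u \<Rightarrow> 'u) \<Rightarrow> ('k::field \<Rightarrow> 'u \<Rightarrow> 'u) \<Rightarrow> 'u set \<Rightarrow>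
   ('v \<Rightarrow> 'v \<Rightarrow> 'v) \<Rightarrow> ('k \<Rightarrow> 'v \<Rightarrow> 'v) \<Rightarrow> 'v set \<Rightarrow> ('u \<times> 'v \<Rightarrow> 'k) set" where
  "tensor_gens addU scU U addV scV V =
     {(\<lambda>p. ind (addU u u', v) p - ind (u, v) p - ind (u', v) p) | u u' v. u \<in> U \<and> u' \<in> U \<and> v \<in> V}
   \<union> {(\<lambda>p. ind (u, addV v v') p - ind (u, v) p - ind (u, v') p) | u v v'. u \<in> U \<and> v \<in> V \<and> v' \<in> V}
   \<union> {(\<lambda>p. ind (scU c u, v) p - c * ind (u, v) p) | c u v. u \<in> U \<and> v \<in> V}
   \<union> {(\<lambda>p. ind (u, scV c v) p - c * ind (u, v) p) | c u v. u \<in> U \<and> v \<in> V}"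

lemma tensor_rels_eq_lincombs:
  "tensor_rels addU scU U addV scV V = lincombs (tensor_gens addU scU U addV scV V)"
  unfolding tensor_rels_def tensor_gens_def ..

lemma fun_subspace_tensor_rels: "fun_subspace (tensor_rels addU scU U addV scV V)"
  unfolding tensor_rels_eq_lincombs by (rule fun_subspace_lincombs)

lemma tensor_rels_add_left:
  "u \<in> U \<Longrightarrow> u' \<in> U \<Longrightarrow> v \<in> V \<Longrightarrow>
   (\<lambda>p. ind (addU u u', v) p - ind (u, v) p - ind (u', v) p) \<in> tensor_rels addU scU U addV scV V"
  unfolding tensor_rels_eq_lincombs by (rule lincombs_generator) (auto simp: tensor_gens_def)

lemma tensor_rels_add_right:
  "u \<in> U \<Longrightarrow> v \<in> V \<Longrightarrow> v' \<in> V \<Longrightarrow>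
   (\<lambda>p. ind (u, addV v v') p - ind (u, v) p - ind (u, v') p) \<in> tensor_rels addU scU U addV scV V"
  unfolding tensor_rels_eq_lincombs by (rule lincombs_generator) (auto simp: tensor_gens_def)

lemma tensor_rels_scale_left:
  "u \<in> U \<Longrightarrow> v \<in> V \<Longrightarrow> (\<lambda>p. ind (scU c u, v) p - c * ind (u, v) p) \<in> tensor_rels addU scU U addV scV V"
  unfolding tensor_rels_eq_lincombs by (rule lincombs_generator) (auto simp: tensor_gens_def)

lemma tensor_rels_scale_right:
  "u \<in> U \<Longrightarrow> v \<in> V \<Longrightarrow> (\<lambda>p. ind (u, scV c v) p - c * ind (u, v) p) \<in> tensor_rels addU scU U addV scV V"
  unfolding tensor_rels_eq_lincombs by (rule lincombs_generator) (auto simp: tensor_gens_def)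

lemma lincombs_subset: "fun_subspace R \<Longrightarrow> G \<subseteq> R \<Longrightarrow> lincombs G \<subseteq> R"
  by (auto elim!: lincombsE intro!: fun_subspace_sum fun_subspace_scale)

lemma tensor_gens_free_on:
  "lin_closed addU scU U \<Longrightarrow> lin_closed addV scV V \<Longrightarrow> tensor_gens addU scU U addV scV V \<subseteq> free_on U V"
  unfolding tensor_gens_def lin_closed_def by (auto intro!: free_on_diff free_on_scale free_on_ind)

lemma tensor_rels_free_on:
  "lin_closed addU scU U \<Longrightarrow> lin_closed addV scV V \<Longrightarrow> tensor_rels addU scU U addV scV V \<subseteq> free_on U V"
  unfolding tensor_rels_eq_lincombs by (intro lincombs_subset fun_subspace_free_on tensor_gens_free_on)

lemma tcarrierE:
  "X \<in> tcarrier R U V \<Longrightarrow> (\<And>f. f \<in> free_on U V \<Longrightarrow> X = tcls R f \<Longrightarrow> thesis) \<Longrightarrow> thesis"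
  unfolding tcarrier_def by blast

lemma tcls_in_tcarrier: "f \<in> free_on U V \<Longrightarrow> tcls R f \<in> tcarrier R U V"
  unfolding tcarrier_def by blast

lemma tcarrier_induct [consumes 2, case_names zero tmk add scale]:
  fixes R :: "('u \<times> 'v \<Rightarrow> 'k::comm_ring_1) set"
  assumes R: "fun_subspace R" and X: "X \<in> tcarrier R U V"
    and zero: "P (tzero R)"
    and tmk: "\<And>u v. u \<in> U \<Longrightarrow> v \<in> V \<Longrightarrow> P (tmk R u v)"
    and add: "\<And>X Y. X \<in> tcarrier R U V \<Longrightarrow> Y \<in> tcarrier R U V \<Longrightarrow> P X \<Longrightarrow> P Y \<Longrightarrow> P (tadd R X Y)"
    and scale: "\<And>c X. X \<in> tcarrier R U V \<Longrightarrow> P X \<Longrightarrow> P (tscale R c X)"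
  shows "P X"
proof -
  obtain f where f: "f \<in> free_on U V" "X = tcls R f" using X by (rule tcarrierE)
  have sf: "supp f \<subseteq> U \<times> V" using f by (simp add: free_on_iff)
  have "(\<lambda>p. \<Sum>q\<in>F. f q * ind q p) \<in> free_on U V \<and> P (tcls R (\<lambda>p. \<Sum>q\<in>F. f q * ind q p))"
    if "finite F" "F \<subseteq> supp f" for F
    using that
  proof (induction F rule: finite_induct)
    case empty
    then show ?case using zero free_on_zero by (simp add: tzero_def)
  next
    case (insert x F)
    obtain u v where x: "x = (u, v)" "u \<in> U" "v \<in> V" using insert sf by auto
    let ?S = "\<lambda>p. \<Sum>q\<in>F. f q * ind q p"
    have IH: "?S \<in> free_on U V" "P (tcls R ?S)" using insert by auto
    have ind: "(ind x :: _ \<Rightarrow> 'k) \<in> free_on U V" unfolding x(1) by (rule free_on_ind) (use x in simp)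
    have "P (tscale R (f x) (tmk R u v))"
      using x ind by (intro scale tmk) (auto simp: tmk_def intro: tcls_in_tcarrier)
    then have "P (tadd R (tscale R (f x) (tmk R u v)) (tcls R ?S))"
      using IH ind by (intro add) (auto simp: tmk_def tscale_tcls[OF R] x intro: tcls_in_tcarrier free_on_scale)
    moreover have "tadd R (tscale R (f x) (tmk R u v)) (tcls R ?S) =
        tcls R (\<lambda>p. \<Sum>q\<in>insert x F. f q * ind q p)"
      using insert by (simp add: tmk_def tscale_tcls[OF R] tadd_tcls[OF R] x)
    moreover have "(\<lambda>p. f x * ind x p + ?S p) \<in> free_on U V"
      using IH ind by (intro free_on_add free_on_scale)
    ultimately show ?case using insert by simp
  qed
  from this[of "supp f"] show ?thesis
    using f by (simp add: free_on_iff fin_supp_def fin_supp_expansion[symmetric])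
qed

locale tensor_mult =
  fixes add1 :: "'u1 \<Rightarrow> 'u1 \<Rightarrow> 'u1" and sc1 :: "'k::field \<Rightarrow> 'u1 \<Rightarrow> 'u1" and U1
    and addV1 :: "'v1 \<Rightarrow> 'v1 \<Rightarrow> 'v1" and scV1 :: "'k \<Rightarrow> 'v1 \<Rightarrow> 'v1" and V1
    and add2 :: "'u2 \<Rightarrow> 'u2 \<Rightarrow> 'u2" and sc2 :: "'k \<Rightarrow> 'u2 \<Rightarrow> 'u2" and U2
    and addV2 :: "'v2 \<Rightarrow> 'v2 \<Rightarrow> 'v2" and scV2 :: "'k \<Rightarrow> 'v2 \<Rightarrow> 'v2" and V2
    and add3 :: "'u3 \<Rightarrow> 'u3 \<Rightarrow> 'u3" and sc3 :: "'k \<Rightarrow> 'u3 \<Rightarrow> 'u3" and U3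
    and addV3 :: "'v3 \<Rightarrow> 'v3 \<Rightarrow> 'v3" and scV3 :: "'k \<Rightarrow> 'v3 \<Rightarrow> 'v3" and V3
    and \<mu> :: "'u1 \<Rightarrow> 'u2 \<Rightarrow> 'u3" and \<nu> :: "'v1 \<Rightarrow> 'v2 \<Rightarrow> 'v3"
  assumes closed1: "lin_closed add1 sc1 U1" "lin_closed addV1 scV1 V1"
    and closed2: "lin_closed add2 sc2 U2" "lin_closed addV2 scV2 V2"
    and mu_in: "\<And>u w. u \<in> U1 \<Longrightarrow> w \<in> U2 \<Longrightarrow> \<mu> u w \<in> U3"
    and nu_in: "\<And>v z. v \<in> V1 \<Longrightarrow> z \<in> V2 \<Longrightarrow> \<nu> v z \<in> V3"
    and mu_add1: "\<And>u u' w. u \<in> U1 \<Longrightarrow> u' \<in> U1 \<Longrightarrow> w \<in> U2 \<Longrightarrow> \<mu> (add1 u u') w = add3 (\<mu> u w) (\<mu> u' w)"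
    and mu_sc1: "\<And>c u w. u \<in> U1 \<Longrightarrow> w \<in> U2 \<Longrightarrow> \<mu> (sc1 c u) w = sc3 c (\<mu> u w)"
    and mu_add2: "\<And>u w w'. u \<in> U1 \<Longrightarrow> w \<in> U2 \<Longrightarrow> w' \<in> U2 \<Longrightarrow> \<mu> u (add2 w w') = add3 (\<mu> u w) (\<mu> u w')"
    and mu_sc2: "\<And>c u w. u \<in> U1 \<Longrightarrow> w \<in> U2 \<Longrightarrow> \<mu> u (sc2 c w) = sc3 c (\<mu> u w)"
    and nu_add1: "\<And>v v' z. v \<in> V1 \<Longrightarrow> v' \<in> V1 \<Longrightarrow> z \<in> V2 \<Longrightarrow> \<nu> (addV1 v v') z = addV3 (\<nu> v z) (\<nu> v' z)"
    and nu_sc1: "\<And>c v z. v \<in> V1 \<Longrightarrow> z \<in> V2 \<Longrightarrow> \<nu> (scV1 c v) z = scV3 c (\<nu> v z)"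
    and nu_add2: "\<And>v z z'. v \<in> V1 \<Longrightarrow> z \<in> V2 \<Longrightarrow> z' \<in> V2 \<Longrightarrow> \<nu> v (addV2 z z') = addV3 (\<nu> v z) (\<nu> v z')"
    and nu_sc2: "\<And>c v z. v \<in> V1 \<Longrightarrow> z \<in> V2 \<Longrightarrow> \<nu> v (scV2 c z) = scV3 c (\<nu> v z)"
begin

abbreviation "R1 \<equiv> tensor_rels add1 sc1 U1 addV1 scV1 V1"
abbreviation "R2 \<equiv> tensor_rels add2 sc2 U2 addV2 scV2 V2"
abbreviation "R3 \<equiv> tensor_rels add3 sc3 U3 addV3 scV3 V3"
abbreviation "mm \<equiv> (\<lambda>(u, v) (u', v'). (\<mu> u u', \<nu> v v'))"

lemma fmul2_gen_ind_in_rels: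
  assumes "\<gamma> \<in> tensor_gens add1 sc1 U1 addV1 scV1 V1" "(w, z) \<in> U2 \<times> V2"
  shows "fmul2 mm \<gamma> (ind (w, z)) \<in> R3"
  using assms unfolding tensor_gens_def
  by (auto simp: fmul2_diff_left fmul2_scale_left fmul2_ind mu_in nu_in mu_add1 mu_sc1 nu_add1 nu_sc1
      intro!: tensor_rels_add_left tensor_rels_add_right tensor_rels_scale_left tensor_rels_scale_right)

lemma fmul2_ind_gen_in_rels:
  assumes "(u, v) \<in> U1 \<times> V1" "\<gamma> \<in> tensor_gens add2 sc2 U2 addV2 scV2 V2"
  shows "fmul2 mm (ind (u, v)) \<gamma> \<in> R3"
  using assms unfolding tensor_gens_def
  by (auto simp: fmul2_diff_right fmul2_scale_right fmul2_ind mu_in nu_in mu_add2 mu_sc2 nu_add2 nu_sc2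
      intro!: tensor_rels_add_left tensor_rels_add_right tensor_rels_scale_left tensor_rels_scale_right)

lemma fmul2_rels_left:
  assumes "f \<in> R1" "g \<in> free_on U2 V2"
  shows "fmul2 mm f g \<in> R3"
proof -
  have g: "fin_supp g" "supp g \<subseteq> U2 \<times> V2" using assms(2) by (auto simp: free_on_iff)
  have "fmul2 mm \<gamma> g \<in> R3" if \<gamma>: "\<gamma> \<in> tensor_gens add1 sc1 U1 addV1 scV1 V1" for \<gamma>
  proof (rule fs_linear_lincombs_mem[OF fun_subspace_tensor_rels _ _ lincombs_ind[OF g(1)]])
    have "\<gamma> \<in> free_on U1 V1" using \<gamma> tensor_gens_free_on[OF closed1] by blast
    then show "fs_linear (fmul2 mm \<gamma>)" by (simp add: fs_linear_fmul2_right free_on_iff)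
    show "fin_supp h \<and> fmul2 mm \<gamma> h \<in> R3" if "h \<in> ind ` supp g" for h
      using that g(2) fmul2_gen_ind_in_rels[OF \<gamma>] by auto
  qed
  moreover have "fin_supp \<gamma>" if "\<gamma> \<in> tensor_gens add1 sc1 U1 addV1 scV1 V1" for \<gamma>
    using that tensor_gens_free_on[OF closed1] by (auto simp: free_on_iff)
  ultimately show ?thesis
    using assms(1) unfolding tensor_rels_eq_lincombs[of add1]
    by (intro fs_linear_lincombs_mem[OF fun_subspace_tensor_rels fs_linear_fmul2_left[OF g(1)]]) auto
qed

lemma fmul2_rels_right:
  assumes "f \<in> free_on U1 V1" "g \<in> R2"
  shows "fmul2 mm f g \<in> R3"
proof -
  have f: "fin_supp f" "supp f \<subseteq> U1 \<times> V1" using assms(1) by (auto simp: free_on_iff)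
  have "fmul2 mm f \<gamma> \<in> R3" if \<gamma>: "\<gamma> \<in> tensor_gens add2 sc2 U2 addV2 scV2 V2" for \<gamma>
  proof (rule fs_linear_lincombs_mem[OF fun_subspace_tensor_rels _ _ lincombs_ind[OF f(1)]])
    have "\<gamma> \<in> free_on U2 V2" using \<gamma> tensor_gens_free_on[OF closed2] by blast
    then show "fs_linear (\<lambda>h. fmul2 mm h \<gamma>)" by (simp add: fs_linear_fmul2_left free_on_iff)
    show "fin_supp h \<and> fmul2 mm h \<gamma> \<in> R3" if "h \<in> ind ` supp f" for h
      using that f(2) fmul2_ind_gen_in_rels[OF _ \<gamma>] by auto
  qed
  moreover have "fin_supp \<gamma>" if "\<gamma> \<in> tensor_gens add2 sc2 U2 addV2 scV2 V2" for \<gamma>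
    using that tensor_gens_free_on[OF closed2] by (auto simp: free_on_iff)
  ultimately show ?thesis
    using assms(2) unfolding tensor_rels_eq_lincombs[of add2]
    by (intro fs_linear_lincombs_mem[OF fun_subspace_tensor_rels fs_linear_fmul2_right[OF f(1)]]) auto
qed

lemma tcls_fmul2_rep:
  assumes f: "f \<in> free_on U1 V1" and g: "g \<in> free_on U2 V2"
  shows "tcls R3 (fmul2 mm (rep (tcls R1 f)) (rep (tcls R2 g))) = tcls R3 (fmul2 mm f g)"
proof -
  let ?f = "rep (tcls R1 f)" and ?g = "rep (tcls R2 g)"
  have f': "?f \<in> free_on U1 V1"
    by (rule rep_tcls_mem[OF fun_subspace_tensor_rels fun_subspace_free_on tensor_rels_free_on[OF closed1] f])
  have g': "?g \<in> free_on U2 V2"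
    by (rule rep_tcls_mem[OF fun_subspace_tensor_rels fun_subspace_free_on tensor_rels_free_on[OF closed2] g])
  have fs: "fin_supp f" "fin_supp g" "fin_supp ?f" "fin_supp ?g" using f g f' g' by (auto simp: free_on_iff)
  have "(\<lambda>r. fmul2 mm ?f ?g r - fmul2 mm f g r) =
      (\<lambda>r. fmul2 mm (\<lambda>p. ?f p - f p) ?g r + fmul2 mm f (\<lambda>p. ?g p - g p) r)"
    using fs by (simp add: fmul2_diff_left fmul2_diff_right)
  also have "\<dots> \<in> R3"
    by (intro fun_subspace_add[OF fun_subspace_tensor_rels] fmul2_rels_left fmul2_rels_right
        rep_tcls_diff[OF fun_subspace_tensor_rels] f g')
  finally show ?thesis by (simp add: tcls_eq_iff[OF fun_subspace_tensor_rels])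
qed

lemma fmul2_free_on:
  assumes "f \<in> free_on U1 V1" "g \<in> free_on U2 V2"
  shows "fmul2 mm f g \<in> free_on U3 V3"
proof -
  have "supp (fmul2 mm f g) \<subseteq> U3 \<times> V3"
    using supp_fmul2[of mm f g] assms by (auto simp: free_on_iff intro!: mu_in nu_in)
  then show ?thesis using assms by (simp add: free_on_iff)
qed

end

definition lin_ext :: "('p \<Rightarrow> ('r \<Rightarrow> 'k) set) \<Rightarrow> ('p \<Rightarrow> 'k::comm_ring_1) \<Rightarrow> ('r \<Rightarrow> 'k)" where
  "lin_ext \<beta> f = (\<lambda>r. \<Sum>p\<in>supp f. f p * rep (\<beta> p) r)"

definition tensor_lift :: "('r \<Rightarrow> 'k) set \<Rightarrow> ('p \<Rightarrow> ('r \<Rightarrow> 'k) set) \<Rightarrow> ('p \<Rightarrow> 'k::comm_ring_1) set \<Rightarrow> ('r \<Rightarrow> 'k) set" where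
  "tensor_lift R' \<beta> X = tcls R' (lin_ext \<beta> (rep X))"

lemma lin_ext_eq_sum: "finite P \<Longrightarrow> supp f \<subseteq> P \<Longrightarrow> lin_ext \<beta> f r = (\<Sum>p\<in>P. f p * rep (\<beta> p) r)"
  unfolding lin_ext_def by (rule sum.mono_neutral_left) (auto simp: supp_def)

lemma fs_linear_lin_ext:
  fixes \<beta> :: "'p \<Rightarrow> ('r \<Rightarrow> 'k::comm_ring_1) set"
  shows "fs_linear (lin_ext \<beta>)"
  unfolding fs_linear_def
proof (intro conjI allI impI ext)
  fix f g :: "'p \<Rightarrow> 'k" and x assume "fin_supp f" "fin_supp g"
  then have "finite (supp f \<union> supp g)" by (simp add: fin_supp_def)
  moreover have "supp (\<lambda>p. f p + g p) \<subseteq> supp f \<union> supp g" by (auto simp: supp_def)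
  ultimately show "lin_ext \<beta> (\<lambda>p. f p + g p) x = lin_ext \<beta> f x + lin_ext \<beta> g x"
    by (simp add: lin_ext_eq_sum[of "supp f \<union> supp g"] distrib_right sum.distrib)
next
  fix f :: "'p \<Rightarrow> 'k" and c x assume "fin_supp f"
  moreover have "supp (\<lambda>p. c * f p) \<subseteq> supp f" by (auto simp: supp_def)
  ultimately show "lin_ext \<beta> (\<lambda>p. c * f p) x = c * lin_ext \<beta> f x"
    by (simp add: lin_ext_eq_sum[of "supp f"] fin_supp_def sum_distrib_left mult.assoc)
qed

lemma lin_ext_ind: "lin_ext \<beta> (ind q) = rep (\<beta> q)"
  by (rule ext) (simp add: lin_ext_eq_sum[of "{q}"] ind_def)

locale tensor_lift_setting =
  fixes addU :: "'u \<Rightarrow> 'u \<Rightarrow> 'u" and scU :: "'k::field \<Rightarrow> 'u \<Rightarrow> 'u" and U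
    and addV :: "'v \<Rightarrow> 'v \<Rightarrow> 'v" and scV :: "'k \<Rightarrow> 'v \<Rightarrow> 'v" and V
    and R' :: "('u' \<times> 'v' \<Rightarrow> 'k) set" and U' V'
    and \<beta> :: "'u \<times> 'v \<Rightarrow> ('u' \<times> 'v' \<Rightarrow> 'k) set"
  assumes closedU: "lin_closed addU scU U" and closedV: "lin_closed addV scV V"
    and R'_subspace: "fun_subspace R'" and R'_free: "R' \<subseteq> free_on U' V'"
    and beta_in: "\<And>u v. u \<in> U \<Longrightarrow> v \<in> V \<Longrightarrow> \<beta> (u, v) \<in> tcarrier R' U' V'"
    and beta_add1: "\<And>u u' v. u \<in> U \<Longrightarrow> u' \<in> U \<Longrightarrow> v \<in> V \<Longrightarrow> \<beta> (addU u u', v) = tadd R' (\<beta> (u, v)) (\<beta> (u', v))"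
    and beta_add2: "\<And>u v v'. u \<in> U \<Longrightarrow> v \<in> V \<Longrightarrow> v' \<in> V \<Longrightarrow> \<beta> (u, addV v v') = tadd R' (\<beta> (u, v)) (\<beta> (u, v'))"
    and beta_sc1: "\<And>c u v. u \<in> U \<Longrightarrow> v \<in> V \<Longrightarrow> \<beta> (scU c u, v) = tscale R' c (\<beta> (u, v))"
    and beta_sc2: "\<And>c u v. u \<in> U \<Longrightarrow> v \<in> V \<Longrightarrow> \<beta> (u, scV c v) = tscale R' c (\<beta> (u, v))"
begin

abbreviation "R \<equiv> tensor_rels addU scU U addV scV V"
abbreviation "lift \<equiv> tensor_lift R' \<beta>"

lemma rep_beta_free_on: "u \<in> U \<Longrightarrow> v \<in> V \<Longrightarrow> rep (\<beta> (u, v)) \<in> free_on U' V'"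
  using beta_in rep_tcls_mem[OF R'_subspace fun_subspace_free_on R'_free] by (metis tcarrierE)

lemma lin_ext_gens_in_rels:
  assumes "\<gamma> \<in> tensor_gens addU scU U addV scV V"
  shows "lin_ext \<beta> \<gamma> \<in> R'"
proof -
  have diff: "lin_ext \<beta> (\<lambda>p. f p - g p) = (\<lambda>r. lin_ext \<beta> f r - lin_ext \<beta> g r)"
    if "fin_supp f" "fin_supp g" for f g
    by (rule fs_linear_diff[OF fs_linear_lin_ext that])
  have add: "(\<lambda>r. rep (tadd R' X Y) r - rep X r - rep Y r) \<in> R'" for X Y
    using rep_tcls_diff[OF R'_subspace, of "\<lambda>p. rep X p + rep Y p"] unfolding tadd_def
    by (simp add: diff_diff_add)
  have scale: "(\<lambda>r. rep (tscale R' c X) r - c * rep X r) \<in> R'" for X c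
    using rep_tcls_diff[OF R'_subspace, of "\<lambda>p. c * rep X p"] unfolding tscale_def by simp
  from assms show ?thesis unfolding tensor_gens_def
    by (auto simp: diff lin_ext_ind fs_linear_scale[OF fs_linear_lin_ext]
        beta_add1 beta_add2 beta_sc1 beta_sc2 add scale)
qed

lemma lin_ext_rels: "f \<in> R \<Longrightarrow> lin_ext \<beta> f \<in> R'"
  unfolding tensor_rels_eq_lincombs
proof (rule fs_linear_lincombs_mem[OF R'_subspace fs_linear_lin_ext])
  fix g assume "g \<in> tensor_gens addU scU U addV scV V"
  then show "fin_supp g \<and> lin_ext \<beta> g \<in> R'"
    using tensor_gens_free_on[OF closedU closedV] lin_ext_gens_in_rels by (auto simp: free_on_iff)
qed

lemma tensor_lift_tcls:
  assumes "f \<in> free_on U V"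
  shows "lift (tcls R f) = tcls R' (lin_ext \<beta> f)"
proof -
  let ?g = "rep (tcls R f)"
  have "?g \<in> free_on U V"
    by (rule rep_tcls_mem[OF fun_subspace_tensor_rels fun_subspace_free_on
          tensor_rels_free_on[OF closedU closedV] assms])
  then have "lin_ext \<beta> (\<lambda>p. ?g p - f p) = (\<lambda>r. lin_ext \<beta> ?g r - lin_ext \<beta> f r)"
    using assms by (intro fs_linear_diff[OF fs_linear_lin_ext]) (auto simp: free_on_iff)
  with lin_ext_rels[OF rep_tcls_diff[OF fun_subspace_tensor_rels, where f=f]] show ?thesis
    unfolding tensor_lift_def by (simp add: tcls_eq_iff[OF R'_subspace])
qed

lemma lin_ext_free_on:
  assumes "f \<in> free_on U V"
  shows "lin_ext \<beta> f \<in> free_on U' V'"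
proof -
  have "(\<lambda>r. \<Sum>p\<in>supp f. f p * rep (\<beta> p) r) \<in> free_on U' V'"
    using assms rep_beta_free_on
    by (intro fun_subspace_sum[OF fun_subspace_free_on] free_on_scale) (auto simp: free_on_iff fin_supp_def)
  then show ?thesis by (simp add: lin_ext_def)
qed

lemma tensor_lift_in: "f \<in> free_on U V \<Longrightarrow> lift (tcls R f) \<in> tcarrier R' U' V'"
  by (simp add: tensor_lift_tcls lin_ext_free_on tcls_in_tcarrier)

lemma tensor_lift_tmk:
  assumes "u \<in> U" "v \<in> V"
  shows "lift (tmk R u v) = \<beta> (u, v)"
proof -
  obtain g where "\<beta> (u, v) = tcls R' g" using beta_in[OF assms] by (rule tcarrierE)
  then show ?thesis
    using assms by (simp add: tmk_def tensor_lift_tcls free_on_ind lin_ext_ind tcls_rep[OF R'_subspace])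
qed

lemma tensor_lift_add:
  assumes "f \<in> free_on U V" "g \<in> free_on U V"
  shows "lift (tadd R (tcls R f) (tcls R g)) = tadd R' (lift (tcls R f)) (lift (tcls R g))"
  using assms free_on_iff[of f] free_on_iff[of g]
  by (simp add: tadd_tcls[OF fun_subspace_tensor_rels] tadd_tcls[OF R'_subspace] tensor_lift_tcls
      free_on_add fs_linear_add[OF fs_linear_lin_ext])

lemma tensor_lift_scale:
  assumes "f \<in> free_on U V"
  shows "lift (tscale R c (tcls R f)) = tscale R' c (lift (tcls R f))"
  using assms free_on_iff[of f]
  by (simp add: tscale_tcls[OF fun_subspace_tensor_rels] tscale_tcls[OF R'_subspace] tensor_lift_tcls
      free_on_scale fs_linear_scale[OF fs_linear_lin_ext])

end

section \<open>The tensor products \<open>A \<otimes> S\<close> and \<open>C(A) \<otimes> S\<close>\<close>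

lemma lin_on_comp:
  "lin_on U addU scU V addV scV f \<Longrightarrow> lin_on V addV scV W addW scW g \<Longrightarrow>
   lin_on U addU scU W addW scW (\<lambda>x. g (f x))"
  by (simp add: lin_on_def)

locale algebra_tensor =
  fixes sA :: "'k::field \<Rightarrow> 'a::ab_group_add \<Rightarrow> 'a"
    and mA :: "'a \<Rightarrow> 'a \<Rightarrow> 'a"
    and sS :: "'k \<Rightarrow> 's::comm_ring_1 \<Rightarrow> 's"
  assumes vsA: "vector_space sA"
    and bilin1: "\<And>x y z. mA (x + y) z = mA x z + mA y z"
    and bilin2: "\<And>x y z. mA x (y + z) = mA x y + mA x z"
    and bilin3: "\<And>c x y. mA (sA c x) y = sA c (mA x y)"
    and bilin4: "\<And>c x y. mA x (sA c y) = sA c (mA x y)"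
    and vsS: "vector_space sS"
    and algS: "\<And>c x y. sS c (x * y) = sS c x * y"
begin

lemma sA_add: "sA c (x + y) = sA c x + sA c y"
  using vector_space.vector_space_assms(1)[OF vsA] .

lemma sA_sA_commute: "sA c (sA e x) = sA e (sA c x)"
  using vector_space.vector_space_assms(3)[OF vsA] by (simp add: mult.commute)

lemma mult_sS: "x * sS c y = sS c (x * y)"
  by (metis algS mult.commute)

lemma CA_iff: "g \<in> CA sA mA \<longleftrightarrow> (\<forall>x y. g (x + y) = g x + g y) \<and> (\<forall>c x. g (sA c x) = sA c (g x)) \<and>
   (\<forall>x y. g (mA x y) = mA (g x) y \<and> g (mA x y) = mA x (g y))"
  by (simp add: CA_def centroid_on_def lin_on_def extensional_def)

lemma
  assumes "g \<in> CA sA mA"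
  shows CA_add: "g (x + y) = g x + g y"
    and CA_sA: "g (sA c x) = sA c (g x)"
    and CA_mA_left: "g (mA x y) = mA (g x) y"
    and CA_mA_right: "g (mA x y) = mA x (g y)"
  using assms unfolding CA_iff by blast+

lemma CA_closed: "lin_closed (\<lambda>g g' x. g x + g' x) (\<lambda>c g x. sA c (g x)) (CA sA mA)"
  unfolding lin_closed_def
proof (intro conjI ballI allI)
  fix g h assume g: "g \<in> CA sA mA" and h: "h \<in> CA sA mA"
  have "g (mA x y) + h (mA x y) = mA (g x + h x) y" for x y
    by (simp add: CA_mA_left[OF g] CA_mA_left[OF h] bilin1)
  moreover have "g (mA x y) + h (mA x y) = mA x (g y + h y)" for x y
    by (simp add: CA_mA_right[OF g] CA_mA_right[OF h] bilin2)
  ultimately show "(\<lambda>x. g x + h x) \<in> CA sA mA"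
    unfolding CA_iff by (simp add: CA_add[OF g] CA_add[OF h] CA_sA[OF g] CA_sA[OF h] sA_add ac_simps)
next
  fix c g assume g: "g \<in> CA sA mA"
  have "sA c (g (mA x y)) = mA (sA c (g x)) y" for x y
    by (simp add: CA_mA_left[OF g] bilin3)
  moreover have "sA c (g (mA x y)) = mA x (sA c (g y))" for x y
    by (simp add: CA_mA_right[OF g] bilin4)
  ultimately show "(\<lambda>x. sA c (g x)) \<in> CA sA mA"
    unfolding CA_iff by (simp add: CA_add[OF g] CA_sA[OF g] sA_add sA_sA_commute)
qed

lemma id_CA: "id \<in> CA sA mA"
  by (simp add: CA_iff)

lemma comp_CA:
  assumes g: "g \<in> CA sA mA" and h: "h \<in> CA sA mA"
  shows "g \<circ> h \<in> CA sA mA"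
proof -
  have "g (h (mA x y)) = mA (g (h x)) y" "g (h (mA x y)) = mA x (g (h y))" for x y
    using CA_mA_left[OF g] CA_mA_left[OF h] CA_mA_right[OF g] CA_mA_right[OF h] by metis+
  then show ?thesis
    unfolding CA_iff o_def by (simp add: CA_add[OF g] CA_add[OF h] CA_sA[OF g] CA_sA[OF h])
qed

lemma UNIV_closed: "lin_closed (+) sc UNIV"
  by (simp add: lin_closed_def)

sublocale AS: tensor_mult "(+)" sA UNIV "(+)" sS UNIV "(+)" sA UNIV "(+)" sS UNIV "(+)" sA UNIV "(+)" sS UNIV
  mA "(*)"
  by unfold_locales (auto simp: UNIV_closed bilin1 bilin2 bilin3 bilin4 distrib_right distrib_left algS mult_sS)

sublocale CS: tensor_mult "\<lambda>g g' x. g x + g' x" "\<lambda>c g x. sA c (g x)" "CA sA mA" "(+)" sS UNIV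
   "\<lambda>g g' x. g x + g' x" "\<lambda>c g x. sA c (g x)" "CA sA mA" "(+)" sS UNIV
   "\<lambda>g g' x. g x + g' x" "\<lambda>c g x. sA c (g x)" "CA sA mA" "(+)" sS UNIV "(\<circ>)" "(*)"
  by unfold_locales
     (auto simp: CA_closed UNIV_closed comp_CA distrib_right distrib_left algS mult_sS CA_add CA_sA fun_eq_iff)

sublocale PS: tensor_mult "\<lambda>g g' x. g x + g' x" "\<lambda>c g x. sA c (g x)" "CA sA mA" "(+)" sS UNIV
   "(+)" sA UNIV "(+)" sS UNIV "(+)" sA UNIV "(+)" sS UNIV "\<lambda>g a. g a" "(*)"
  by unfold_locales
     (auto simp: CA_closed UNIV_closed distrib_right distrib_left algS mult_sS CA_add CA_sA)

abbreviation "R \<equiv> rels_AS sA sS"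
abbreviation "T \<equiv> TAS sA sS"
abbreviation "ad \<equiv> tadd R"
abbreviation "sc \<equiv> tscale R"
abbreviation "tz \<equiv> tzero R"
abbreviation "mu \<equiv> mulAS sA sS mA"
abbreviation "tm \<equiv> tmk R"
abbreviation "RC \<equiv> rels_CS sA mA sS"
abbreviation "TC \<equiv> TCS sA mA sS"
abbreviation "adc \<equiv> tadd RC"
abbreviation "scc \<equiv> tscale RC"
abbreviation "muc \<equiv> mulCS sA mA sS"
abbreviation "tmc \<equiv> tmk RC"
abbreviation "\<psi> \<equiv> psi sA mA sS"

definition sub :: "('a \<times> 's \<Rightarrow> 'k) set \<Rightarrow> ('a \<times> 's \<Rightarrow> 'k) set \<Rightarrow> ('a \<times> 's \<Rightarrow> 'k) set" where
  "sub X Y = ad X (sc (-1) Y)"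

lemma R_subspace: "fun_subspace R"
  unfolding rels_AS_def by (rule fun_subspace_tensor_rels)

lemma RC_subspace: "fun_subspace RC"
  unfolding rels_CS_def by (rule fun_subspace_tensor_rels)

lemma T_eq: "T = tcls R ` {f. fin_supp f}"
  by (simp add: TAS_def tcarrier_def free_on_UNIV)

lemma TE: "X \<in> T \<Longrightarrow> (\<And>f. fin_supp f \<Longrightarrow> X = tcls R f \<Longrightarrow> thesis) \<Longrightarrow> thesis"
  unfolding T_eq by blast

lemma TCE: "X \<in> TC \<Longrightarrow> (\<And>f. f \<in> free_on (CA sA mA) UNIV \<Longrightarrow> X = tcls RC f \<Longrightarrow> thesis) \<Longrightarrow> thesis"
  unfolding TCS_def by (rule tcarrierE)

lemma tcls_in_T: "fin_supp f \<Longrightarrow> tcls R f \<in> T"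
  unfolding T_eq by blast

lemma tcls_in_TC: "f \<in> free_on (CA sA mA) UNIV \<Longrightarrow> tcls RC f \<in> TC"
  unfolding TCS_def by (rule tcls_in_tcarrier)

lemma fin_supp_free_on_CA: "f \<in> free_on (CA sA mA) UNIV \<Longrightarrow> fin_supp f"
  by (simp add: free_on_iff)

lemma ad_tcls: "ad (tcls R f) (tcls R g) = tcls R (\<lambda>p. f p + g p)"
  by (rule tadd_tcls[OF R_subspace])

lemma sc_tcls: "sc c (tcls R f) = tcls R (\<lambda>p. c * f p)"
  by (rule tscale_tcls[OF R_subspace])

lemma sub_tcls: "sub (tcls R f) (tcls R g) = tcls R (\<lambda>p. f p - g p)"
  by (simp add: sub_def ad_tcls sc_tcls)

lemma tz_tcls: "tz = tcls R (\<lambda>_. 0)"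
  by (simp add: tzero_def)

lemma tm_tcls: "tm a s = tcls R (ind (a, s))"
  by (simp add: tmk_def)

lemma mu_tcls: "fin_supp f \<Longrightarrow> fin_supp g \<Longrightarrow> mu (tcls R f) (tcls R g) = tcls R (fmul2 AS.mm f g)"
  unfolding mulAS_def rels_AS_def using AS.tcls_fmul2_rep by (simp add: free_on_UNIV)

lemma adc_tcls: "adc (tcls RC f) (tcls RC g) = tcls RC (\<lambda>p. f p + g p)"
  by (rule tadd_tcls[OF RC_subspace])

lemma scc_tcls: "scc c (tcls RC f) = tcls RC (\<lambda>p. c * f p)"
  by (rule tscale_tcls[OF RC_subspace])

lemma tmc_tcls: "tmc g s = tcls RC (ind (g, s))"
  by (simp add: tmk_def)

lemma muc_tcls:
  "f \<in> free_on (CA sA mA) UNIV \<Longrightarrow> g \<in> free_on (CA sA mA) UNIV \<Longrightarrow>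
   muc (tcls RC f) (tcls RC g) = tcls RC (fmul2 CS.mm f g)"
  unfolding mulCS_def rels_CS_def by (rule CS.tcls_fmul2_rep)

lemma psi_tcls:
  "f \<in> free_on (CA sA mA) UNIV \<Longrightarrow> fin_supp g \<Longrightarrow> \<psi> (tcls RC f) (tcls R g) = tcls R (fmul2 PS.mm f g)"
  unfolding psi_def using tcls_in_T[of g] PS.tcls_fmul2_rep[of f g]
  by (simp add: free_on_UNIV rels_CS_def rels_AS_def)

lemmas tcls_simps = ad_tcls sc_tcls sub_tcls mu_tcls tz_tcls fmul2_add_left fmul2_add_right
  fmul2_scale_left fmul2_scale_right fmul2_diff_left fmul2_diff_right

lemma tcls_cong: "(\<And>p. f p = g p) \<Longrightarrow> tcls R f = tcls R g"
  by (rule arg_cong[where f="tcls R"]) (rule ext)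

lemma T_ad: "X \<in> T \<Longrightarrow> Y \<in> T \<Longrightarrow> ad X Y \<in> T"
  by (elim TE) (simp add: ad_tcls tcls_in_T)

lemma T_sc: "X \<in> T \<Longrightarrow> sc c X \<in> T"
  by (elim TE) (simp add: sc_tcls tcls_in_T)

lemma T_sub: "X \<in> T \<Longrightarrow> Y \<in> T \<Longrightarrow> sub X Y \<in> T"
  by (elim TE) (simp add: sub_tcls tcls_in_T)

lemma T_mu: "X \<in> T \<Longrightarrow> Y \<in> T \<Longrightarrow> mu X Y \<in> T"
  by (elim TE) (simp add: mu_tcls tcls_in_T)

lemma T_tz: "tz \<in> T"
  by (simp add: tz_tcls tcls_in_T)

lemma T_tm: "tm a s \<in> T"
  by (simp add: tm_tcls tcls_in_T)

lemma sc_zero: "sc 0 X = tz"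
  by (simp add: tscale_def tzero_def)

lemma sub_tz: "X \<in> T \<Longrightarrow> sub X tz = X"
  by (elim TE) (simp add: tcls_simps)

lemma ad_sub_sub: "X \<in> T \<Longrightarrow> Y \<in> T \<Longrightarrow> Z \<in> T \<Longrightarrow> ad (sub X Y) (sub Y Z) = sub X Z"
  by (elim TE) (simp add: tcls_simps)

lemma sub_ad_cancel: "X \<in> T \<Longrightarrow> Y \<in> T \<Longrightarrow> sub (ad X Y) Y = X"
  by (elim TE) (simp add: tcls_simps)

lemma sub_ad_cancel_left: "X \<in> T \<Longrightarrow> Y \<in> T \<Longrightarrow> Z \<in> T \<Longrightarrow> sub (ad Z X) (ad Z Y) = sub X Y"
  by (elim TE) (simp add: tcls_simps)

lemma sub_ad_cancel_right: "X \<in> T \<Longrightarrow> Y \<in> T \<Longrightarrow> Z \<in> T \<Longrightarrow> sub (ad X Z) (ad Y Z) = sub X Y"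
  by (elim TE) (simp add: tcls_simps)

lemma sub_ad_ad: "X \<in> T \<Longrightarrow> Y \<in> T \<Longrightarrow> Z \<in> T \<Longrightarrow> W \<in> T \<Longrightarrow> sub (ad X Y) (ad Z W) = ad (sub X Z) (sub Y W)"
  by (elim TE) (simp add: tcls_simps, rule tcls_cong, simp add: algebra_simps)

lemma ad_ad_swap: "X \<in> T \<Longrightarrow> Y \<in> T \<Longrightarrow> Z \<in> T \<Longrightarrow> W \<in> T \<Longrightarrow> ad (ad X Y) (ad Z W) = ad (ad X Z) (ad Y W)"
  by (elim TE) (simp add: tcls_simps, rule tcls_cong, simp add: algebra_simps)

lemma sc_ad: "X \<in> T \<Longrightarrow> Y \<in> T \<Longrightarrow> sc c (ad X Y) = ad (sc c X) (sc c Y)"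
  by (elim TE) (simp add: tcls_simps, rule tcls_cong, simp add: algebra_simps)

lemma sc_sub: "X \<in> T \<Longrightarrow> Y \<in> T \<Longrightarrow> sc c (sub X Y) = sub (sc c X) (sc c Y)"
  by (elim TE) (simp add: tcls_simps, rule tcls_cong, simp add: algebra_simps)

lemma ad_self_eq_imp_tz:
  assumes "X \<in> T" "ad X X = X"
  shows "X = tz"
proof -
  obtain f where f: "fin_supp f" "X = tcls R f" using assms(1) by (rule TE)
  then have "(\<lambda>p. (f p + f p) - f p) \<in> R"
    using assms(2) by (simp add: ad_tcls tcls_eq_iff[OF R_subspace])
  then show ?thesis using f by (simp add: tz_tcls tcls_eq_iff[OF R_subspace])
qed

lemma mu_ad_left: "X \<in> T \<Longrightarrow> Y \<in> T \<Longrightarrow> Z \<in> T \<Longrightarrow> mu (ad X Y) Z = ad (mu X Z) (mu Y Z)"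
  by (elim TE) (simp add: tcls_simps)

lemma mu_ad_right: "X \<in> T \<Longrightarrow> Y \<in> T \<Longrightarrow> Z \<in> T \<Longrightarrow> mu Z (ad X Y) = ad (mu Z X) (mu Z Y)"
  by (elim TE) (simp add: tcls_simps)

lemma mu_sc_left: "X \<in> T \<Longrightarrow> Z \<in> T \<Longrightarrow> mu (sc c X) Z = sc c (mu X Z)"
  by (elim TE) (simp add: tcls_simps)

lemma mu_sc_right: "X \<in> T \<Longrightarrow> Z \<in> T \<Longrightarrow> mu Z (sc c X) = sc c (mu Z X)"
  by (elim TE) (simp add: tcls_simps)

lemma mu_sub_left: "X \<in> T \<Longrightarrow> Y \<in> T \<Longrightarrow> Z \<in> T \<Longrightarrow> mu (sub X Y) Z = sub (mu X Z) (mu Y Z)"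
  by (elim TE) (simp add: tcls_simps)

lemma mu_sub_right: "X \<in> T \<Longrightarrow> Y \<in> T \<Longrightarrow> Z \<in> T \<Longrightarrow> mu Z (sub X Y) = sub (mu Z X) (mu Z Y)"
  by (elim TE) (simp add: tcls_simps)

lemma mu_tm: "mu (tm a s) (tm b t) = tm (mA a b) (s * t)"
  by (simp add: tm_tcls mu_tcls fmul2_ind)

lemma ad_tm_left: "ad (tm a s) (tm b s) = tm (a + b) s"
proof -
  have "(\<lambda>p. ind (a + b, s) p - ind (a, s) p - ind (b, s) p) \<in> R"
    unfolding rels_AS_def by (rule tensor_rels_add_left) simp_all
  then have "tcls R (ind (a + b, s)) = tcls R (\<lambda>p. ind (a, s) p + ind (b, s) p)"
    by (simp add: tcls_eq_iff[OF R_subspace] diff_diff_add)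
  then show ?thesis by (simp add: tm_tcls ad_tcls)
qed

lemma sc_tm_left: "sc c (tm a s) = tm (sA c a) s"
proof -
  have "(\<lambda>p. ind (sA c a, s) p - c * ind (a, s) p) \<in> R"
    unfolding rels_AS_def by (rule tensor_rels_scale_left) simp_all
  then have "tcls R (ind (sA c a, s)) = tcls R (\<lambda>p. c * ind (a, s) p)"
    by (simp add: tcls_eq_iff[OF R_subspace])
  then show ?thesis by (simp add: tm_tcls sc_tcls)
qed

lemma TC_tmc: "g \<in> CA sA mA \<Longrightarrow> tmc g s \<in> TC"
  by (simp add: tmc_tcls tcls_in_TC free_on_ind)

lemma TC_adc: "X \<in> TC \<Longrightarrow> Y \<in> TC \<Longrightarrow> adc X Y \<in> TC"
  by (elim TCE) (simp add: adc_tcls tcls_in_TC free_on_add)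

lemma TC_scc: "X \<in> TC \<Longrightarrow> scc c X \<in> TC"
  by (elim TCE) (simp add: scc_tcls tcls_in_TC free_on_scale)

lemma TC_muc: "X \<in> TC \<Longrightarrow> Y \<in> TC \<Longrightarrow> muc X Y \<in> TC"
  by (elim TCE) (simp add: muc_tcls tcls_in_TC CS.fmul2_free_on)

lemma adc_tmc_id: "adc (tmc id s) (tmc id t) = tmc id (s + t)"
proof -
  have "(\<lambda>p. ind (id, s + t) p - ind (id, s) p - ind (id, t) p) \<in> RC"
    unfolding rels_CS_def by (rule tensor_rels_add_right[OF id_CA]) simp_all
  then have "tcls RC (ind (id, s + t)) = tcls RC (\<lambda>p. ind (id, s) p + ind (id, t) p)"
    by (simp add: tcls_eq_iff[OF RC_subspace] diff_diff_add)
  then show ?thesis by (simp add: tmc_tcls adc_tcls)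
qed

lemma scc_tmc_id: "scc c (tmc id s) = tmc id (sS c s)"
proof -
  have "(\<lambda>p. ind (id, sS c s) p - c * ind (id, s) p) \<in> RC"
    unfolding rels_CS_def by (rule tensor_rels_scale_right[OF id_CA]) simp
  then have "tcls RC (ind (id, sS c s)) = tcls RC (\<lambda>p. c * ind (id, s) p)"
    by (simp add: tcls_eq_iff[OF RC_subspace])
  then show ?thesis by (simp add: tmc_tcls scc_tcls)
qed

lemma muc_tmc_id: "muc (tmc id s) (tmc id t) = tmc id (s * t)"
  by (simp add: tmc_tcls muc_tcls free_on_ind id_CA fmul2_ind)

lemma T_psi: "X \<in> TC \<Longrightarrow> Z \<in> T \<Longrightarrow> \<psi> X Z \<in> T"
  by (elim TCE TE) (simp add: psi_tcls tcls_in_T fin_supp_free_on_CA)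

lemma psi_extensional: "\<psi> X \<in> extensional T"
  by (simp add: psi_def)

lemma psi_adc: "X \<in> TC \<Longrightarrow> Y \<in> TC \<Longrightarrow> Z \<in> T \<Longrightarrow> \<psi> (adc X Y) Z = ad (\<psi> X Z) (\<psi> Y Z)"
  by (elim TCE TE) (simp add: psi_tcls adc_tcls ad_tcls free_on_add fin_supp_free_on_CA fmul2_add_left)

lemma psi_scc: "X \<in> TC \<Longrightarrow> Z \<in> T \<Longrightarrow> \<psi> (scc c X) Z = sc c (\<psi> X Z)"
  by (elim TCE TE) (simp add: psi_tcls scc_tcls sc_tcls free_on_scale fin_supp_free_on_CA fmul2_scale_left)

lemma psi_muc:
  assumes "X \<in> TC" "Y \<in> TC" "Z \<in> T"
  shows "\<psi> (muc X Y) Z = \<psi> X (\<psi> Y Z)"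
proof -
  have assoc: "PS.mm (CS.mm p q) r = PS.mm p (PS.mm q r)" for p q r
    by (simp add: split_beta mult.assoc)
  from assms show ?thesis
    by (elim TCE TE) (simp add: psi_tcls muc_tcls CS.fmul2_free_on fin_supp_free_on_CA fmul2_assoc[where m=PS.mm and m'=CS.mm and n=PS.mm and n'=PS.mm, OF assoc])
qed

lemma psi_tmc_id_tm: "\<psi> (tmc id s) (tm a t) = tm a (s * t)"
  by (simp add: tmc_tcls tm_tcls psi_tcls free_on_ind id_CA fmul2_ind)

lemma psi_tmc_id_one: "Z \<in> T \<Longrightarrow> \<psi> (tmc id 1) Z = Z"
  by (elim TE) (simp add: tmc_tcls psi_tcls free_on_ind id_CA fmul2_ind_left_neutral split_beta)

section \<open>Centroid and derivations of \<open>A \<otimes> S\<close>\<close>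

abbreviation "lin_T \<equiv> lin_on T ad sc T ad sc"
abbreviation "Cent \<equiv> centroid_on T ad sc mu"
abbreviation "Der \<equiv> derivs T T ad sc mu"

lemma lin_T_ad:
  assumes f: "lin_T f" and g: "lin_T g"
  shows "lin_T (\<lambda>Z. ad (f Z) (g Z))"
  using assms unfolding lin_on_def by (simp add: T_ad T_sc ad_ad_swap sc_ad)

lemma lin_T_sub:
  assumes f: "lin_T f" and g: "lin_T g"
  shows "lin_T (\<lambda>Z. sub (f Z) (g Z))"
  using assms unfolding lin_on_def by (simp add: T_ad T_sc T_sub sub_ad_ad sc_sub)

lemma lin_T_mu_left: "X \<in> T \<Longrightarrow> lin_T (\<lambda>Z. mu Z X)"
  by (simp add: lin_on_def T_mu T_ad T_sc mu_ad_left mu_sc_left)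

lemma lin_T_mu_right: "X \<in> T \<Longrightarrow> lin_T (mu X)"
  by (simp add: lin_on_def T_mu T_ad T_sc mu_ad_right mu_sc_right)

lemma lin_T_tz: "lin_T f \<Longrightarrow> f tz = tz"
  using T_tz unfolding lin_on_def by (metis sc_zero)

lemma lin_T_eqI:
  assumes f: "lin_T f" and g: "lin_T g" and tm: "\<And>a s. f (tm a s) = g (tm a s)" and Z: "Z \<in> T"
  shows "f Z = g Z"
  using R_subspace Z[unfolded TAS_def rels_AS_def[symmetric]]
proof (induction Z rule: tcarrier_induct)
  case zero
  show ?case using lin_T_tz[OF f] lin_T_tz[OF g] by simp
next
  case (tmk u v)
  show ?case by (rule tm)
next
  case (add X Y)
  then show ?case using f g by (simp add: lin_on_def TAS_def rels_AS_def)
next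
  case (scale c X)
  then show ?case using f g by (simp add: lin_on_def TAS_def rels_AS_def)
qed

lemma Cent_iff:
  "L \<in> Cent \<longleftrightarrow> L \<in> extensional T \<and> lin_T L \<and> (\<forall>X\<in>T. \<forall>Y\<in>T. L (mu X Y) = mu (L X) Y \<and> L (mu X Y) = mu X (L Y))"
  by (simp add: centroid_on_def)

lemma
  assumes "L \<in> Cent"
  shows Cent_lin_T: "lin_T L"
    and Cent_T: "Z \<in> T \<Longrightarrow> L Z \<in> T"
    and Cent_ad: "Z \<in> T \<Longrightarrow> W \<in> T \<Longrightarrow> L (ad Z W) = ad (L Z) (L W)"
    and Cent_sc: "Z \<in> T \<Longrightarrow> L (sc c Z) = sc c (L Z)"
    and Cent_mu_left: "Z \<in> T \<Longrightarrow> W \<in> T \<Longrightarrow> L (mu Z W) = mu (L Z) W"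
    and Cent_mu_right: "Z \<in> T \<Longrightarrow> W \<in> T \<Longrightarrow> L (mu Z W) = mu Z (L W)"
  using assms unfolding Cent_iff lin_on_def by blast+

lemma Cent_sub: "L \<in> Cent \<Longrightarrow> Z \<in> T \<Longrightarrow> W \<in> T \<Longrightarrow> L (sub Z W) = sub (L Z) (L W)"
  by (simp add: sub_def Cent_ad Cent_sc T_sc)

lemma Der_iff:
  "d \<in> Der \<longleftrightarrow> d \<in> extensional T \<and> lin_T d \<and> (\<forall>X\<in>T. \<forall>Y\<in>T. d (mu X Y) = ad (mu (d X) Y) (mu X (d Y)))"
  by (simp add: derivs_def)

lemma
  assumes "d \<in> Der"
  shows Der_extensional: "d \<in> extensional T"
    and Der_lin_T: "lin_T d"
    and Der_T: "Z \<in> T \<Longrightarrow> d Z \<in> T"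
    and Der_ad: "Z \<in> T \<Longrightarrow> W \<in> T \<Longrightarrow> d (ad Z W) = ad (d Z) (d W)"
    and Der_sc: "Z \<in> T \<Longrightarrow> d (sc c Z) = sc c (d Z)"
    and Der_mu: "Z \<in> T \<Longrightarrow> W \<in> T \<Longrightarrow> d (mu Z W) = ad (mu (d Z) W) (mu Z (d W))"
  using assms unfolding Der_iff lin_on_def by blast+

text \<open>Both sides of the Leibniz rule are linear in each argument, so it suffices to check it on
  elementary tensors.\<close>

lemma DerI_tm:
  assumes ext: "d \<in> extensional T" and lin: "lin_T d"
    and tm: "\<And>a s b t. d (mu (tm a s) (tm b t)) = ad (mu (d (tm a s)) (tm b t)) (mu (tm a s) (d (tm b t)))"
  shows "d \<in> Der"
proof -
  have dT: "Z \<in> T \<Longrightarrow> d Z \<in> T" for Z using lin by (simp add: lin_on_def)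
  have tm_left: "d (mu (tm a s) W) = ad (mu (d (tm a s)) W) (mu (tm a s) (d W))" if W: "W \<in> T" for a s W
    by (rule lin_T_eqI[OF lin_on_comp[OF lin_T_mu_right lin] lin_T_ad[OF lin_T_mu_right
          lin_on_comp[OF lin lin_T_mu_right]] tm W]) (simp_all add: T_tm dT)
  have "d (mu Z W) = ad (mu (d Z) W) (mu Z (d W))" if "Z \<in> T" "W \<in> T" for Z W
    by (rule lin_T_eqI[OF lin_on_comp[OF lin_T_mu_left lin] lin_T_ad[OF lin_on_comp[OF lin lin_T_mu_left]
          lin_T_mu_left] tm_left that(1)]) (simp_all add: that dT)
  then show ?thesis using ext lin by (simp add: Der_iff)
qed

definition commutator :: "(('a \<times> 's \<Rightarrow> 'k) set \<Rightarrow> ('a \<times> 's \<Rightarrow> 'k) set) \<Rightarrow>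
    (('a \<times> 's \<Rightarrow> 'k) set \<Rightarrow> ('a \<times> 's \<Rightarrow> 'k) set) \<Rightarrow> ('a \<times> 's \<Rightarrow> 'k) set \<Rightarrow> ('a \<times> 's \<Rightarrow> 'k) set" where
  "commutator d L = restrict (\<lambda>X. sub (d (L X)) (L (d X))) T"

lemma commutator_apply: "Z \<in> T \<Longrightarrow> commutator d L Z = sub (d (L Z)) (L (d Z))"
  by (simp add: commutator_def)

lemma commutator_extensional: "commutator d L \<in> extensional T"
  by (simp add: commutator_def)

lemma commutator_in_Cent:
  assumes d: "d \<in> Der" and L: "L \<in> Cent"
  shows "commutator d L \<in> Cent"
proof -
  have lin: "lin_T (commutator d L)"
  proof -
    have "lin_T (\<lambda>Z. sub (d (L Z)) (L (d Z)))"
      by (rule lin_T_sub[OF lin_on_comp[OF Cent_lin_T[OF L] Der_lin_T[OF d]]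
            lin_on_comp[OF Der_lin_T[OF d] Cent_lin_T[OF L]]])
    then show ?thesis by (simp add: lin_on_def commutator_def T_ad T_sc)
  qed
  have left: "commutator d L (mu Z W) = mu (commutator d L Z) W" if ZW: "Z \<in> T" "W \<in> T" for Z W
  proof -
    have "commutator d L (mu Z W) =
        sub (ad (mu (d (L Z)) W) (mu (L Z) (d W))) (ad (mu (L (d Z)) W) (mu (L Z) (d W)))"
      using ZW by (simp add: commutator_apply T_mu Cent_mu_left[OF L] Der_mu[OF d] Cent_ad[OF L]
          Cent_T[OF L] Der_T[OF d])
    also have "\<dots> = mu (commutator d L Z) W"
      using ZW by (simp add: commutator_apply sub_ad_cancel_right mu_sub_left T_mu Cent_T[OF L] Der_T[OF d])
    finally show ?thesis .
  qed
  have right: "commutator d L (mu Z W) = mu Z (commutator d L W)" if ZW: "Z \<in> T" "W \<in> T" for Z W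
  proof -
    have "commutator d L (mu Z W) =
        sub (ad (mu (d Z) (L W)) (mu Z (d (L W)))) (ad (mu (d Z) (L W)) (mu Z (L (d W))))"
      using ZW by (simp add: commutator_apply T_mu Cent_mu_right[OF L] Der_mu[OF d] Cent_ad[OF L]
          Cent_T[OF L] Der_T[OF d])
    also have "\<dots> = mu Z (commutator d L W)"
      using ZW by (simp add: commutator_apply sub_ad_cancel_left mu_sub_right T_mu Cent_T[OF L] Der_T[OF d])
    finally show ?thesis .
  qed
  show ?thesis using lin left right commutator_extensional by (simp add: Cent_iff)
qed

end

section \<open>Derivations of \<open>A \<otimes> S\<close> vanishing on \<open>A \<otimes> 1\<close>\<close>

locale algebra_tensor_iso = algebra_tensor +
  assumes psi_iso: "bij_betw (psi sA mA sS) (TCS sA mA sS)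
        (centroid_on (TAS sA sS) (tadd (rels_AS sA sS)) (tscale (rels_AS sA sS)) (mulAS sA sS mA))"
begin

abbreviation "O1 \<equiv> OneS sA mA sS"

lemma psi_Cent: "X \<in> TC \<Longrightarrow> \<psi> X \<in> Cent"
  using bij_betw_apply[OF psi_iso] .

lemma inv_psi_TC: "L \<in> Cent \<Longrightarrow> inv_into TC \<psi> L \<in> TC"
  using psi_iso by (metis bij_betw_def inv_into_into)

lemma psi_inv_psi: "L \<in> Cent \<Longrightarrow> \<psi> (inv_into TC \<psi> L) = L"
  using psi_iso by (metis bij_betw_inv_into_right)

lemma inv_psi_psi: "X \<in> TC \<Longrightarrow> inv_into TC \<psi> (\<psi> X) = X"
  using bij_betw_imp_inj_on[OF psi_iso] by (rule inv_into_f_f)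

lemma O1_iff: "Y \<in> O1 \<longleftrightarrow> (\<exists>s. Y = tmc id s)"
  by (simp add: OneS_def)

lemma tmc_id_O1: "tmc id s \<in> O1"
  by (auto simp: O1_iff)

lemma O1_TC: "Y \<in> O1 \<Longrightarrow> Y \<in> TC"
  by (auto simp: O1_iff TC_tmc id_CA)

lemma Cent_psi_tmc_id: "\<psi> (tmc id s) \<in> Cent"
  by (rule psi_Cent[OF TC_tmc[OF id_CA]])

definition comm_der where
  "comm_der d = restrict (\<lambda>Y. inv_into TC \<psi> (commutator d (\<psi> Y))) O1"

lemma comm_der_TC: "d \<in> Der \<Longrightarrow> Y \<in> O1 \<Longrightarrow> comm_der d Y \<in> TC"
  by (simp add: comm_der_def inv_psi_TC commutator_in_Cent psi_Cent O1_TC)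

lemma psi_comm_der: "d \<in> Der \<Longrightarrow> Y \<in> O1 \<Longrightarrow> \<psi> (comm_der d Y) = commutator d (\<psi> Y)"
  by (simp add: comm_der_def psi_inv_psi commutator_in_Cent psi_Cent O1_TC)

lemma psi_comm_der_apply: "d \<in> Der \<Longrightarrow> Y \<in> O1 \<Longrightarrow> Z \<in> T \<Longrightarrow> \<psi> (comm_der d Y) Z = sub (d (\<psi> Y Z)) (\<psi> Y (d Z))"
  by (simp add: psi_comm_der commutator_apply)

lemma comm_der_eqI:
  assumes "Y \<in> O1" "W \<in> TC" "\<And>Z. Z \<in> T \<Longrightarrow> commutator d (\<psi> Y) Z = \<psi> W Z"
  shows "comm_der d Y = W"
proof -
  have "commutator d (\<psi> Y) = \<psi> W"
    using assms(3) by (rule extensionalityI[OF commutator_extensional psi_extensional])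
  then show ?thesis using assms(1,2) by (simp add: comm_der_def inv_psi_psi)
qed

lemma comm_der_adc:
  assumes d: "d \<in> Der" and Y: "Y \<in> O1" "Y' \<in> O1"
  shows "comm_der d (adc Y Y') = adc (comm_der d Y) (comm_der d Y')"
proof (rule comm_der_eqI)
  show "adc Y Y' \<in> O1" using Y by (auto simp: O1_iff adc_tmc_id)
  show "adc (comm_der d Y) (comm_der d Y') \<in> TC" using Y by (simp add: TC_adc comm_der_TC d)
next
  fix Z assume Z: "Z \<in> T"
  have YT: "Y \<in> TC" "Y' \<in> TC" using Y by (simp_all add: O1_TC)
  have "commutator d (\<psi> (adc Y Y')) Z = sub (ad (d (\<psi> Y Z)) (d (\<psi> Y' Z))) (ad (\<psi> Y (d Z)) (\<psi> Y' (d Z)))"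
    using Z YT by (simp add: commutator_apply psi_adc Der_T[OF d] Der_ad[OF d] T_psi)
  also have "\<dots> = \<psi> (adc (comm_der d Y) (comm_der d Y')) Z"
    using Z YT Y by (simp add: sub_ad_ad psi_adc comm_der_TC psi_comm_der_apply d Der_T[OF d] T_psi)
  finally show "commutator d (\<psi> (adc Y Y')) Z = \<psi> (adc (comm_der d Y) (comm_der d Y')) Z" .
qed

lemma comm_der_scc:
  assumes d: "d \<in> Der" and Y: "Y \<in> O1"
  shows "comm_der d (scc c Y) = scc c (comm_der d Y)"
proof (rule comm_der_eqI)
  show "scc c Y \<in> O1" using Y by (auto simp: O1_iff scc_tmc_id)
  show "scc c (comm_der d Y) \<in> TC" using Y by (simp add: TC_scc comm_der_TC d)
next
  fix Z assume Z: "Z \<in> T"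
  have YT: "Y \<in> TC" using Y by (simp add: O1_TC)
  have "commutator d (\<psi> (scc c Y)) Z = sub (sc c (d (\<psi> Y Z))) (sc c (\<psi> Y (d Z)))"
    using Z YT by (simp add: commutator_apply psi_scc Der_T[OF d] Der_sc[OF d] T_psi)
  also have "\<dots> = \<psi> (scc c (comm_der d Y)) Z"
    using Z YT Y by (simp add: sc_sub psi_scc comm_der_TC psi_comm_der_apply d Der_T[OF d] T_psi)
  finally show "commutator d (\<psi> (scc c Y)) Z = \<psi> (scc c (comm_der d Y)) Z" .
qed

lemma comm_der_muc:
  assumes d: "d \<in> Der" and Y: "Y \<in> O1" "Y' \<in> O1"
  shows "comm_der d (muc Y Y') = adc (muc (comm_der d Y) Y') (muc Y (comm_der d Y'))"
proof (rule comm_der_eqI)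
  show "muc Y Y' \<in> O1" using Y by (auto simp: O1_iff muc_tmc_id)
  show "adc (muc (comm_der d Y) Y') (muc Y (comm_der d Y')) \<in> TC"
    using Y by (simp add: TC_adc TC_muc O1_TC comm_der_TC d)
next
  fix Z assume Z: "Z \<in> T"
  have YT: "Y \<in> TC" "Y' \<in> TC" using Y by (simp_all add: O1_TC)
  have T1: "\<psi> Y' Z \<in> T" "\<psi> Y' (d Z) \<in> T" "d (\<psi> Y' Z) \<in> T" "\<psi> Y (d (\<psi> Y' Z)) \<in> T"
    "d (\<psi> Y (\<psi> Y' Z)) \<in> T" "\<psi> Y (\<psi> Y' (d Z)) \<in> T" "d Z \<in> T"
    using Z YT by (simp_all add: T_psi Der_T[OF d])
  have "\<psi> (adc (muc (comm_der d Y) Y') (muc Y (comm_der d Y'))) Z =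
      ad (sub (d (\<psi> Y (\<psi> Y' Z))) (\<psi> Y (d (\<psi> Y' Z)))) (sub (\<psi> Y (d (\<psi> Y' Z))) (\<psi> Y (\<psi> Y' (d Z))))"
    using Z YT Y T1 by (simp add: psi_adc psi_muc TC_muc comm_der_TC psi_comm_der_apply d
        Cent_sub[OF psi_Cent])
  also have "\<dots> = commutator d (\<psi> (muc Y Y')) Z"
    using Z YT T1 by (simp add: ad_sub_sub commutator_apply psi_muc)
  finally show "commutator d (\<psi> (muc Y Y')) Z = \<psi> (adc (muc (comm_der d Y) Y') (muc Y (comm_der d Y'))) Z" ..
qed

lemma comm_der_Der1S:
  assumes d: "d \<in> Der"
  shows "comm_der d \<in> Der1S sA mA sS"
proof -
  have "comm_der d \<in> extensional O1" by (simp add: comm_der_def)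
  then show ?thesis
    unfolding Der1S_def derivs_def lin_on_def
    using comm_der_TC[OF d] comm_der_adc[OF d] comm_der_scc[OF d] comm_der_muc[OF d] by blast
qed

lemma comm_der_add:
  assumes d: "d \<in> Der" and d': "d' \<in> Der"
  shows "comm_der (restrict (\<lambda>X. ad (d X) (d' X)) T) = restrict (\<lambda>Y. adc (comm_der d Y) (comm_der d' Y)) O1"
proof (rule extensionalityI)
  fix Y assume Y: "Y \<in> O1"
  have "comm_der (restrict (\<lambda>X. ad (d X) (d' X)) T) Y = adc (comm_der d Y) (comm_der d' Y)"
  proof (rule comm_der_eqI[OF Y])
    show "adc (comm_der d Y) (comm_der d' Y) \<in> TC" using Y by (simp add: TC_adc comm_der_TC d d')
  next
    fix Z assume Z: "Z \<in> T"
    have YT: "Y \<in> TC" using Y by (simp add: O1_TC)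
    show "commutator (restrict (\<lambda>X. ad (d X) (d' X)) T) (\<psi> Y) Z = \<psi> (adc (comm_der d Y) (comm_der d' Y)) Z"
      using Z YT Y
      by (simp add: commutator_apply psi_adc comm_der_TC psi_comm_der_apply d d' sub_ad_ad T_psi
          Der_T[OF d] Der_T[OF d'] Cent_ad[OF psi_Cent])
  qed
  then show "comm_der (restrict (\<lambda>X. ad (d X) (d' X)) T) Y = restrict (\<lambda>Y. adc (comm_der d Y) (comm_der d' Y)) O1 Y"
    using Y by simp
qed (simp_all add: comm_der_def)

lemma comm_der_scale:
  assumes d: "d \<in> Der"
  shows "comm_der (restrict (\<lambda>X. sc c (d X)) T) = restrict (\<lambda>Y. scc c (comm_der d Y)) O1"
proof (rule extensionalityI)
  fix Y assume Y: "Y \<in> O1"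
  have "comm_der (restrict (\<lambda>X. sc c (d X)) T) Y = scc c (comm_der d Y)"
  proof (rule comm_der_eqI[OF Y])
    show "scc c (comm_der d Y) \<in> TC" using Y by (simp add: TC_scc comm_der_TC d)
  next
    fix Z assume Z: "Z \<in> T"
    have YT: "Y \<in> TC" using Y by (simp add: O1_TC)
    show "commutator (restrict (\<lambda>X. sc c (d X)) T) (\<psi> Y) Z = \<psi> (scc c (comm_der d Y)) Z"
      using Z YT Y
      by (simp add: commutator_apply psi_scc comm_der_TC psi_comm_der_apply d sc_sub T_psi T_sc
          Der_T[OF d] Cent_sc[OF psi_Cent])
  qed
  then show "comm_der (restrict (\<lambda>X. sc c (d X)) T) Y = restrict (\<lambda>Y. scc c (comm_der d Y)) O1 Y"
    using Y by simp
qed (simp_all add: comm_der_def)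

lemma DerA1_iff: "d \<in> DerA1 sA mA sS \<longleftrightarrow> d \<in> Der \<and> (\<forall>a. d (tm a 1) = tz)"
  by (simp add: DerA1_def)

lemma DerA1_tm: "d \<in> DerA1 sA mA sS \<Longrightarrow> d (tm a s) = commutator d (\<psi> (tmc id s)) (tm a 1)"
  by (simp add: DerA1_iff commutator_apply T_tm psi_tmc_id_tm lin_T_tz[OF Cent_lin_T[OF Cent_psi_tmc_id]]
      sub_tz Der_T)

lemma comm_der_inj_on: "inj_on comm_der (DerA1 sA mA sS)"
proof (rule inj_onI)
  fix d d' assume d: "d \<in> DerA1 sA mA sS" and d': "d' \<in> DerA1 sA mA sS" and eq: "comm_der d = comm_der d'"
  then have D: "d \<in> Der" "d' \<in> Der" by (simp_all add: DerA1_iff)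
  have tm: "d (tm a s) = d' (tm a s)" for a s
    using psi_comm_der[OF D(1) tmc_id_O1] psi_comm_der[OF D(2) tmc_id_O1] eq
    by (simp add: DerA1_tm[OF d] DerA1_tm[OF d'])
  show "d = d'"
    by (rule extensionalityI[OF Der_extensional[OF D(1)] Der_extensional[OF D(2)]],
        rule lin_T_eqI[OF Der_lin_T[OF D(1)] Der_lin_T[OF D(2)] tm])
qed

definition der_of where
  "der_of D = restrict (tensor_lift R (\<lambda>(a, s). \<psi> (D (tmc id s)) (tm a 1))) T"

context
  fixes D assumes D: "D \<in> Der1S sA mA sS"
begin

lemma
  shows D_TC: "D (tmc id s) \<in> TC"
    and D_adc: "D (tmc id (s + t)) = adc (D (tmc id s)) (D (tmc id t))"
    and D_scc: "D (tmc id (sS c s)) = scc c (D (tmc id s))"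
    and D_muc: "D (tmc id (s * t)) = adc (muc (D (tmc id s)) (tmc id t)) (muc (tmc id s) (D (tmc id t)))"
  using D tmc_id_O1
  unfolding Der1S_def derivs_def lin_on_def adc_tmc_id[symmetric] scc_tmc_id[symmetric] muc_tmc_id[symmetric]
  by blast+

lemma psi_D_mult:
  "Z \<in> T \<Longrightarrow> \<psi> (D (tmc id (s * t))) Z = ad (\<psi> (D (tmc id s)) (\<psi> (tmc id t) Z)) (\<psi> (tmc id s) (\<psi> (D (tmc id t)) Z))"
  by (simp add: D_muc psi_adc psi_muc TC_muc D_TC TC_tmc id_CA)

lemma der_of_lift_setting:
  "tensor_lift_setting (+) sA UNIV (+) sS UNIV R UNIV UNIV (\<lambda>(a, s). \<psi> (D (tmc id s)) (tm a 1))"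
proof
  show "R \<subseteq> free_on UNIV UNIV"
    unfolding rels_AS_def by (rule tensor_rels_free_on[OF UNIV_closed UNIV_closed])
  show "(case (a, s) of (a, s) \<Rightarrow> \<psi> (D (tmc id s)) (tm a 1)) \<in> tcarrier R UNIV UNIV" for a s
    using T_psi[OF D_TC T_tm] by (simp add: TAS_def)
qed (simp_all add: UNIV_closed R_subspace D_adc D_scc psi_adc psi_scc D_TC T_tm ad_tm_left[symmetric]
      sc_tm_left[symmetric] Cent_ad[OF psi_Cent[OF D_TC]] Cent_sc[OF psi_Cent[OF D_TC]])

interpretation lift: tensor_lift_setting "(+)" sA UNIV "(+)" sS UNIV R UNIV UNIV
    "\<lambda>(a, s). \<psi> (D (tmc id s)) (tm a 1)"
  by (rule der_of_lift_setting)

lemma der_of_tm: "der_of D (tm a s) = \<psi> (D (tmc id s)) (tm a 1)"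
  using lift.tensor_lift_tmk[folded rels_AS_def, of a s] by (simp add: der_of_def T_tm)

lemma der_of_lin_T: "lin_T (der_of D)"
proof -
  have der_of: "der_of D X = lift.lift X" if "X \<in> T" for X
    using that by (simp add: der_of_def)
  note lift = lift.tensor_lift_in lift.tensor_lift_add lift.tensor_lift_scale
  show ?thesis
    unfolding lin_on_def
    using lift[folded rels_AS_def TAS_def, unfolded free_on_UNIV]
    by (auto elim!: TE simp: der_of T_ad T_sc tcls_in_T)
qed

lemma der_of_tm_one: "der_of D (tm a 1) = tz"
proof -
  let ?E = "\<psi> (D (tmc id 1)) (tm a 1)"
  have ET: "?E \<in> T" by (simp add: T_psi D_TC T_tm)
  have "?E = ad ?E ?E"
    using psi_D_mult[of "tm a 1" 1 1] ET by (simp add: T_tm psi_tmc_id_one)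
  then show ?thesis using ad_self_eq_imp_tz[OF ET] by (simp add: der_of_tm)
qed

lemma der_of_leibniz_tm:
  "der_of D (mu (tm a s) (tm b t)) = ad (mu (der_of D (tm a s)) (tm b t)) (mu (tm a s) (der_of D (tm b t)))"
proof -
  have C: "\<psi> (D (tmc id s)) \<in> Cent" for s by (rule psi_Cent[OF D_TC])
  have "der_of D (mu (tm a s) (tm b t)) = \<psi> (D (tmc id (s * t))) (tm (mA a b) 1)"
    by (simp add: mu_tm der_of_tm)
  also have "\<dots> = ad (\<psi> (D (tmc id s)) (tm (mA a b) t)) (\<psi> (tmc id s) (\<psi> (D (tmc id t)) (tm (mA a b) 1)))"
    by (simp add: psi_D_mult T_tm psi_tmc_id_tm)
  also have "\<psi> (D (tmc id s)) (tm (mA a b) t) = mu (der_of D (tm a s)) (tm b t)"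
    using Cent_mu_left[OF C T_tm T_tm, of s a 1 b t] by (simp add: mu_tm der_of_tm)
  also have "\<psi> (tmc id s) (\<psi> (D (tmc id t)) (tm (mA a b) 1)) = mu (tm a s) (der_of D (tm b t))"
    using Cent_mu_right[OF C T_tm T_tm, of t a 1 b 1] T_psi[OF D_TC T_tm]
    by (simp add: mu_tm der_of_tm Cent_mu_left[OF Cent_psi_tmc_id T_tm] psi_tmc_id_tm)
  finally show ?thesis .
qed

lemma der_of_DerA1: "der_of D \<in> DerA1 sA mA sS"
proof -
  have "der_of D \<in> Der"
    by (rule DerI_tm[OF _ der_of_lin_T der_of_leibniz_tm]) (unfold der_of_def, rule restrict_extensional)
  then show ?thesis by (simp add: DerA1_iff der_of_tm_one)
qed

lemma comm_der_der_of: "comm_der (der_of D) = D"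
proof (rule extensionalityI)
  show "comm_der (der_of D) \<in> extensional O1" by (simp add: comm_der_def)
  show "D \<in> extensional O1" using D by (simp add: Der1S_def derivs_def)
  fix Y assume Y: "Y \<in> O1"
  then obtain s where s: "Y = tmc id s" by (auto simp: O1_iff)
  have d: "der_of D \<in> Der" using der_of_DerA1 by (simp add: DerA1_iff)
  have tm: "commutator (der_of D) (\<psi> Y) (tm a t) = \<psi> (D Y) (tm a t)" for a t
  proof -
    have "der_of D (tm a (s * t)) = ad (\<psi> (D Y) (tm a t)) (\<psi> Y (der_of D (tm a t)))"
      using psi_D_mult[of "tm a 1" s t] by (simp add: der_of_tm psi_tmc_id_tm s T_tm)
    then show ?thesis
      by (simp add: commutator_apply s psi_tmc_id_tm T_tm sub_ad_cancel T_psi D_TC Der_T[OF d] TC_tmc id_CA)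
  qed
  show "comm_der (der_of D) Y = D Y"
  proof (rule comm_der_eqI[OF Y])
    show "D Y \<in> TC" unfolding s by (rule D_TC)
    show "commutator (der_of D) (\<psi> Y) Z = \<psi> (D Y) Z" if "Z \<in> T" for Z
      by (rule lin_T_eqI[OF Cent_lin_T[OF commutator_in_Cent[OF d psi_Cent[OF O1_TC[OF Y]]]]
            Cent_lin_T[OF psi_Cent[OF \<open>D Y \<in> TC\<close>]] tm that])
  qed
qed

end

lemma comm_der_image: "comm_der ` DerA1 sA mA sS = Der1S sA mA sS"
proof
  show "comm_der ` DerA1 sA mA sS \<subseteq> Der1S sA mA sS"
    using comm_der_Der1S by (auto simp: DerA1_iff)
  show "Der1S sA mA sS \<subseteq> comm_der ` DerA1 sA mA sS"
    using der_of_DerA1 comm_der_der_of by (metis image_eqI subsetI)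
qed

end

theorem lemma2p2:
  fixes sA :: "'k::field \<Rightarrow> 'a::ab_group_add \<Rightarrow> 'a"
    and mA :: "'a \<Rightarrow> 'a \<Rightarrow> 'a"
    and sS :: "'k \<Rightarrow> 's::comm_ring_1 \<Rightarrow> 's"
  assumes vsA: "vector_space sA"
    and bilin1: "\<And>x y z. mA (x + y) z = mA x z + mA y z"
    and bilin2: "\<And>x y z. mA x (y + z) = mA x y + mA x z"
    and bilin3: "\<And>c x y. mA (sA c x) y = sA c (mA x y)"
    and bilin4: "\<And>c x y. mA x (sA c y) = sA c (mA x y)"
    and perfect: "module.span sA {mA x y | x y. True} = UNIV"
    and vsS: "vector_space sS"
    and algS: "\<And>c x y. sS c (x * y) = sS c x * y"
    and psi_iso: "bij_betw (psi sA mA sS) (TCS sA mA sS)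
        (centroid_on (TAS sA sS) (tadd (rels_AS sA sS)) (tscale (rels_AS sA sS)) (mulAS sA sS mA))"
  shows "\<exists>F. fun_space_iso F
           (DerA1 sA mA sS) (TAS sA sS) (tadd (rels_AS sA sS)) (tscale (rels_AS sA sS))
           (Der1S sA mA sS) (OneS sA mA sS) (tadd (rels_CS sA mA sS)) (tscale (rels_CS sA mA sS))"
proof -
  interpret algebra_tensor_iso sA mA sS
    by (intro algebra_tensor_iso.intro algebra_tensor.intro algebra_tensor_iso_axioms.intro)
       (fact vsA bilin1 bilin2 bilin3 bilin4 vsS algS psi_iso)+
  have "bij_betw comm_der (DerA1 sA mA sS) (Der1S sA mA sS)"
    by (simp add: bij_betw_def comm_der_inj_on comm_der_image)
  moreover have "d \<in> DerA1 sA mA sS \<Longrightarrow> d \<in> Der" for d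
    by (simp add: DerA1_iff)
  ultimately show ?thesis
    unfolding fun_space_iso_def using comm_der_add comm_der_scale by blast
qed

end
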